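(* Let $\alpha=\frac12$, $\mu>0$, $s>1$, $\theta_0\in H^s$, and let $\theta\in L^\infty([0,T];H^s)$ be the solution of the regularized QG initial value problem given by local existence. Let $T_1>T$. If $\sup\{\|\theta(\cdot,t)\|_1: t<T_1,\ \theta \text{ defined at } t\}<\infty$ (i.e. $\theta\in L^\infty([0,T_1];H^1)$ on its interval of existence), then $\theta$ can be extended to a solution in $L^\infty([0,T_1];H^s)$.
   Context: Setting: $\Omega=[0,2\pi]^2$ with periodic boundary conditions; all functions are periodic with zero mean. For a periodic distribution $f$, $\hat f(k)=(2\pi)^{-2}\int_\Omega f(x)e^{-ik\cdot x}\,dx$, $k\in\mathbb Z^2$. $\Lambda=(-\Delta)^{1/2}$, $\widehat{\Lambda^\beta f}(k)=|k|^\beta\hat f(k)$. Riesz transforms: $\widehat{\mathcal R_j f}(k)=-i\frac{k_j}{|k|}\hat f(k)$, $k\ne0$. $\|f\|_s=(\sum_k|k|^{2s}|\hat f(k)|^2)^{1/2}$, $H^s=\{f:\|f\|_s<\infty\}$. The regularized QG initial value problem (with zero forcing) is $$\theta_t+u\cdot\nabla\theta+\mu(-\Delta)^\alpha\theta_t=0,\quad u=(-\mathcal R_2\theta,\mathcal R_1\theta),\quad\theta(x,0)=\theta_0(x),$$ with $\mu>0$. A solution on $[0,T]$ in $L^\infty([0,T];H^s)$ means $\theta\in L^\infty([0,T];H^s)$ satisfying $\theta(t)=\theta_0-\int_0^t(1+\mu\Lambda^{2\alpha})^{-1}\nabla\cdot(u\theta)(\tau)\,d\tau$. For $\alpha\ge\frac12$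 and $s>1$ such a solution exists and is unique on a short time interval. *)

theory Defs
  imports "HOL-Analysis.Analysis"
begin

text \<open>Periodic functions on [0,2pi]^2 are represented by their Fourier coefficients
  f :: int \<times> int \<Rightarrow> complex.\<close>

definition knorm :: "int \<times> int \<Rightarrow> real" where
  "knorm k = sqrt ((real_of_int (fst k))\<^sup>2 + (real_of_int (snd k))\<^sup>2)"

text \<open>Membership in H^s: zero mean, real-valued (Hermitian symmetric coefficients),
  finite H^s norm.\<close>
definition in_H :: "real \<Rightarrow> (int \<times> int \<Rightarrow> complex) \<Rightarrow> bool" where
  "in_H s f \<longleftrightarrow> f (0, 0) = 0 \<and> (\<forall>k. f (- fst k, - snd k) = cnj (f k)) \<and>
     (\<lambda>k. knorm k powr (2 * s) * (cmod (f k))\<^sup>2) summable_on UNIV"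

definition Hnorm :: "real \<Rightarrow> (int \<times> int \<Rightarrow> complex) \<Rightarrow> real" where
  "Hnorm s f = sqrt (\<Sum>\<^sub>\<infinity>k. knorm k powr (2 * s) * (cmod (f k))\<^sup>2)"

text \<open>Fourier coefficients of u = (-R_2 theta, R_1 theta), where R_j has symbol -i k_j/|k|.\<close>
definition vel :: "(int \<times> int \<Rightarrow> complex) \<Rightarrow> int \<times> int \<Rightarrow> complex \<times> complex" where
  "vel f k = (if k = (0, 0) then (0, 0) else
     (\<i> * of_int (snd k) / of_real (knorm k) * f k,
      - \<i> * of_int (fst k) / of_real (knorm k) * f k))"

text \<open>Fourier coefficient at k of div(u theta): i k . (u-hat * theta-hat)(k).\<close>
definition flux_div :: "(int \<times> int \<Rightarrow> complex) \<Rightarrow> int \<times> int \<Rightarrow> complex" where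
  "flux_div f k = \<i> * (of_int (fst k) * (\<Sum>\<^sub>\<infinity>j. fst (vel f j) * f (fst k - fst j, snd k - snd j))
                   + of_int (snd k) * (\<Sum>\<^sub>\<infinity>j. snd (vel f j) * f (fst k - fst j, snd k - snd j)))"

text \<open>theta is a solution on [0,T] in L^infty([0,T];H^s) of the regularized QG problem:
  theta(t) = theta_0 - int_0^t (1 + mu Lambda^{2 alpha})^{-1} div(u theta)(tau) dtau.\<close>
definition rQG_solution ::
  "real \<Rightarrow> real \<Rightarrow> real \<Rightarrow> (int \<times> int \<Rightarrow> complex) \<Rightarrow> real \<Rightarrow> (real \<Rightarrow> int \<times> int \<Rightarrow> complex) \<Rightarrow> bool" where
  "rQG_solution \<alpha> \<mu> s \<theta>0 T \<theta> \<longleftrightarrow>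
     (\<exists>B. \<forall>t\<in>{0..T}. in_H s (\<theta> t) \<and> Hnorm s (\<theta> t) \<le> B) \<and>
     (\<forall>t\<in>{0..T}. \<forall>k.
        (\<lambda>\<tau>. flux_div (\<theta> \<tau>) k / of_real (1 + \<mu> * knorm k powr (2 * \<alpha>))) integrable_on {0..t} \<and>
        \<theta> t k = \<theta>0 k - integral {0..t} (\<lambda>\<tau>. flux_div (\<theta> \<tau>) k / of_real (1 + \<mu> * knorm k powr (2 * \<alpha>))))"

end

(* The regularization (1 + mu Lambda)^-1 absorbs the derivative in div (u theta), so on
   Fourier coefficients the nonlinearity is a bounded bilinear map of H^s (s > 1, where the
   coefficients are summable), and Picard iteration solves the equation on an interval of
   length 1/(8 C K) whenever the data have H^s norm at most K.  It thus suffices to bound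
   the H^s norm uniformly up to T1.  A Brezis-Gallouet type inequality bounds the l^1 norm
   of the coefficients by (1 + |theta|_1) (c0 + c1 log (1 + |theta|_s)), so with |theta|_1
   bounded x = |theta|_s obeys x' <= A x (c0 + c1 log (1 + x)) and grows at most double
   exponentially; finitely many local steps of uniform length then reach T1. *)

theory Submission
  imports Defs
begin

lemma knorm_nonneg [simp]: "0 \<le> knorm k"
  by (simp add: knorm_def)

lemma knorm_uminus [simp]: "knorm (- k) = knorm k"
  by (simp add: knorm_def)

lemma knorm_squared: "(knorm k)\<^sup>2 = (real_of_int (fst k))\<^sup>2 + (real_of_int (snd k))\<^sup>2"
  by (simp add: knorm_def)

lemma abs_fst_le_knorm: "\<bar>real_of_int (fst k)\<bar> \<le> knorm k"
  unfolding knorm_def by (rule real_le_rsqrt) simp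

lemma abs_snd_le_knorm: "\<bar>real_of_int (snd k)\<bar> \<le> knorm k"
  unfolding knorm_def by (rule real_le_rsqrt) simp

lemma one_le_abs_of_int: "(a::int) \<noteq> 0 \<Longrightarrow> 1 \<le> \<bar>real_of_int a\<bar>"
  by linarith

lemma knorm_ge_1: assumes "k \<noteq> (0, 0)" shows "1 \<le> knorm k"
proof -
  have "fst k \<noteq> 0 \<or> snd k \<noteq> 0" using assms by (cases k) auto
  thus ?thesis using abs_fst_le_knorm[of k] abs_snd_le_knorm[of k] one_le_abs_of_int by fastforce
qed

lemma knorm_pos: "k \<noteq> (0, 0) \<Longrightarrow> 0 < knorm k"
  using knorm_ge_1[of k] by linarith

lemma knorm_add_le: "knorm (j + k) \<le> knorm j + knorm k"
  unfolding knorm_def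
  using real_sqrt_sum_squares_triangle_ineq[of "real_of_int (fst j)" "real_of_int (fst k)"
      "real_of_int (snd j)" "real_of_int (snd k)"]
  by simp

lemma knorm_le_diff: "knorm k \<le> knorm j + knorm (k - j)"
  using knorm_add_le[of j "k - j"] by simp

lemma knorm_powr_le_diff:
  assumes "0 \<le> s"
  shows "knorm k powr s \<le> 2 powr s * (knorm j powr s + knorm (k - j) powr s)"
proof -
  define m where "m = max (knorm j) (knorm (k - j))"
  have "knorm k \<le> 2 * m" using knorm_le_diff[of k j] unfolding m_def by linarith
  hence "knorm k powr s \<le> (2 * m) powr s" by (rule powr_mono2[OF assms knorm_nonneg])
  also have "\<dots> = 2 powr s * m powr s" by (simp add: powr_mult m_def)
  also have "m powr s \<le> knorm j powr s + knorm (k - j) powr s" unfolding m_def by (simp add: max_def)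
  finally show ?thesis by simp
qed

lemma power2_powr: fixes x s :: real shows "(x powr s)\<^sup>2 = x powr (2 * s)"
proof -
  have "x powr (2 * s) = x powr (s + s)" by (rule arg_cong[where f="\<lambda>t. x powr t"]) simp
  also have "\<dots> = x powr s * x powr s" by (rule powr_add)
  finally show ?thesis by (simp only: power2_eq_square)
qed

section \<open>Sobolev and Wiener bounds on Fourier coefficients\<close>

text \<open>\<open>H_bound s f c\<close> says \<open>\<parallel>f\<parallel>\<^sub>s \<le> c\<close>, phrased through finite partial sums so that it
  does not presuppose summability and passes to pointwise limits.\<close>
definition H_bound :: "real \<Rightarrow> (int \<times> int \<Rightarrow> complex) \<Rightarrow> real \<Rightarrow> bool" where
  "H_bound s f c \<longleftrightarrow> (\<forall>A. finite A \<longrightarrow> L2_set (\<lambda>k. knorm k powr s * cmod (f k)) A \<le> c)"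

definition l1_bound :: "(int \<times> int \<Rightarrow> complex) \<Rightarrow> real \<Rightarrow> bool" where
  "l1_bound f c \<longleftrightarrow> (\<forall>A. finite A \<longrightarrow> (\<Sum>k\<in>A. cmod (f k)) \<le> c)"

definition hermitian :: "(int \<times> int \<Rightarrow> complex) \<Rightarrow> bool" where
  "hermitian f \<longleftrightarrow> (\<forall>k. f (- k) = cnj (f k))"

lemma H_bound_nonneg: "H_bound s f c \<Longrightarrow> 0 \<le> c"
  unfolding H_bound_def by (metis L2_set_empty finite.emptyI)

lemma H_bound_mono: "H_bound s f c \<Longrightarrow> c \<le> c' \<Longrightarrow> H_bound s f c'"
  unfolding H_bound_def by force

lemma H_bound_cong: "H_bound s f c \<Longrightarrow> (\<And>k. cmod (g k) = cmod (f k)) \<Longrightarrow> H_bound s g c"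
  unfolding H_bound_def by simp

lemma H_bound_zero: "H_bound s (\<lambda>k. 0) 0"
  unfolding H_bound_def L2_set_def by simp

lemma H_bound_add:
  assumes "H_bound s f a" "H_bound s g b"
  shows "H_bound s (\<lambda>k. f k + g k) (a + b)"
  unfolding H_bound_def
proof (intro allI impI)
  fix A :: "(int \<times> int) set" assume A: "finite A"
  have "L2_set (\<lambda>k. knorm k powr s * cmod (f k + g k)) A
     \<le> L2_set (\<lambda>k. knorm k powr s * cmod (f k) + knorm k powr s * cmod (g k)) A"
    by (rule L2_set_mono) (auto simp: norm_triangle_ineq distrib_left[symmetric] mult_left_mono)
  also have "\<dots> \<le> L2_set (\<lambda>k. knorm k powr s * cmod (f k)) A + L2_set (\<lambda>k. knorm k powr s * cmod (g k)) A"
    by (rule L2_set_triangle_ineq)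
  also have "\<dots> \<le> a + b" using assms A unfolding H_bound_def by (meson add_mono)
  finally show "L2_set (\<lambda>k. knorm k powr s * cmod (f k + g k)) A \<le> a + b" .
qed

lemma H_bound_uminus: "H_bound s f a \<Longrightarrow> H_bound s (\<lambda>k. - f k) a"
  by (erule H_bound_cong) simp

lemma H_bound_diff: "H_bound s f a \<Longrightarrow> H_bound s g b \<Longrightarrow> H_bound s (\<lambda>k. f k - g k) (a + b)"
  using H_bound_add[of s f a "\<lambda>k. - g k" b] H_bound_uminus[of s g b] by simp

lemma H_bound_diff_commute: "H_bound s (\<lambda>k. f k - g k) a \<Longrightarrow> H_bound s (\<lambda>k. g k - f k) a"
  by (erule H_bound_cong) (simp add: norm_minus_commute)

lemma H_bound_weighted_coeff: "H_bound s f c \<Longrightarrow> knorm k powr s * cmod (f k) \<le> c"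
  unfolding H_bound_def by (drule spec[of _ "{k}"]) simp

lemma H_bound_coeff:
  assumes "H_bound s f c" "0 \<le> s" "f (0, 0) = 0"
  shows "cmod (f k) \<le> c"
proof (cases "k = (0, 0)")
  case True thus ?thesis using assms(3) H_bound_nonneg[OF assms(1)] by simp
next
  case False
  have "1 \<le> knorm k powr s" using knorm_ge_1[OF False] assms(2) by (simp add: ge_one_powr_ge_zero)
  thus ?thesis using H_bound_weighted_coeff[OF assms(1), of k] mult_right_mono[of 1 _ "cmod (f k)"]
    by force
qed

lemma H_bound_limit:
  assumes lim: "\<And>k. (\<lambda>n. x n k) \<longlonglongrightarrow> y k" and ev: "\<forall>\<^sub>F n in sequentially. H_bound s (x n) c"
  shows "H_bound s y c"
  unfolding H_bound_def
proof (intro allI impI)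
  fix A :: "(int \<times> int) set" assume A: "finite A"
  have "(\<lambda>n. L2_set (\<lambda>k. knorm k powr s * cmod (x n k)) A) \<longlonglongrightarrow> L2_set (\<lambda>k. knorm k powr s * cmod (y k)) A"
    unfolding L2_set_def by (intro tendsto_intros lim)
  moreover have "\<forall>\<^sub>F n in sequentially. L2_set (\<lambda>k. knorm k powr s * cmod (x n k)) A \<le> c"
    using ev by eventually_elim (use A in \<open>auto simp: H_bound_def\<close>)
  ultimately show "L2_set (\<lambda>k. knorm k powr s * cmod (y k)) A \<le> c"
    by (rule tendsto_upperbound) simp
qed

lemma H_bound_Hnorm:
  assumes "(\<lambda>k. knorm k powr (2 * s) * (cmod (f k))\<^sup>2) summable_on UNIV"
  shows "H_bound s f (Hnorm s f)"
  unfolding H_bound_def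
proof (intro allI impI)
  fix A :: "(int \<times> int) set" assume A: "finite A"
  have "(\<Sum>k\<in>A. (knorm k powr s * cmod (f k))\<^sup>2) = (\<Sum>k\<in>A. knorm k powr (2 * s) * (cmod (f k))\<^sup>2)"
    by (simp add: power_mult_distrib power2_powr)
  also have "\<dots> \<le> (\<Sum>\<^sub>\<infinity>k. knorm k powr (2 * s) * (cmod (f k))\<^sup>2)"
    by (rule finite_sum_le_infsum[OF assms A]) auto
  finally show "L2_set (\<lambda>k. knorm k powr s * cmod (f k)) A \<le> Hnorm s f"
    unfolding L2_set_def Hnorm_def by (rule real_sqrt_le_mono)
qed

lemma H_bound_summable:
  assumes "H_bound s f c"
  shows "(\<lambda>k. knorm k powr (2 * s) * (cmod (f k))\<^sup>2) summable_on UNIV"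
    and "Hnorm s f \<le> c"
proof -
  have fin: "(\<Sum>k\<in>F. knorm k powr (2 * s) * (cmod (f k))\<^sup>2) \<le> c\<^sup>2" if "finite F" for F
  proof -
    define S where "S = (\<Sum>k\<in>F. (knorm k powr s * cmod (f k))\<^sup>2)"
    have "sqrt S \<le> c" using assms that unfolding H_bound_def L2_set_def S_def by blast
    moreover have "0 \<le> S" unfolding S_def by (rule sum_nonneg) simp
    ultimately have "S \<le> c\<^sup>2" using real_sqrt_le_iff[of S "c\<^sup>2"] H_bound_nonneg[OF assms] by simp
    thus ?thesis by (simp add: S_def power_mult_distrib power2_powr)
  qed
  show sm: "(\<lambda>k. knorm k powr (2 * s) * (cmod (f k))\<^sup>2) summable_on UNIV"
    by (rule nonneg_bdd_above_summable_on) (auto intro!: bdd_aboveI[where M="c\<^sup>2"] fin)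
  have "(\<Sum>\<^sub>\<infinity>k. knorm k powr (2 * s) * (cmod (f k))\<^sup>2) \<le> c\<^sup>2"
    by (rule infsum_le_finite_sums[OF sm]) (simp add: fin)
  thus "Hnorm s f \<le> c" unfolding Hnorm_def using H_bound_nonneg[OF assms]
    by (simp add: real_sqrt_le_iff real_le_lsqrt)
qed

lemma hermitianD: "hermitian f \<Longrightarrow> f (- k) = cnj (f k)"
  unfolding hermitian_def by blast

lemma hermitian_iff: "hermitian f \<longleftrightarrow> (\<forall>k. f (- fst k, - snd k) = cnj (f k))"
  unfolding hermitian_def by (simp add: uminus_prod_def case_prod_beta)

lemma in_H_iff_H_bound:
  "in_H s f \<longleftrightarrow> hermitian f \<and> f (0, 0) = 0 \<and> (\<exists>c. H_bound s f c)"
  unfolding in_H_def hermitian_iff using H_bound_Hnorm H_bound_summable(1) by blast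

lemma in_H_H_bound: "in_H s f \<Longrightarrow> H_bound s f (Hnorm s f)"
  unfolding in_H_def by (auto intro: H_bound_Hnorm)

lemma in_H_H_bound_lower:
  assumes "in_H s f" "t \<le> s"
  shows "H_bound t f (Hnorm t f)"
proof (rule H_bound_Hnorm, rule summable_on_comparison_test)
  show "(\<lambda>k. knorm k powr (2 * s) * (cmod (f k))\<^sup>2) summable_on UNIV"
    using assms unfolding in_H_def by auto
  fix k :: "int \<times> int"
  show "knorm k powr (2 * t) * (cmod (f k))\<^sup>2 \<le> knorm k powr (2 * s) * (cmod (f k))\<^sup>2"
  proof (cases "k = (0, 0)")
    case True thus ?thesis using assms(1) by (simp add: in_H_def)
  next
    case False
    hence "knorm k powr (2 * t) \<le> knorm k powr (2 * s)" using knorm_ge_1[OF False] assms(2)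
      by (intro powr_mono) auto
    thus ?thesis by (simp add: mult_right_mono)
  qed
qed simp

lemma l1_bound_summable:
  assumes "l1_bound f c"
  shows "(\<lambda>j. cmod (f j)) summable_on UNIV" and "(\<Sum>\<^sub>\<infinity>j. cmod (f j)) \<le> c"
proof -
  show s: "(\<lambda>j. cmod (f j)) summable_on UNIV"
    by (rule nonneg_bdd_above_summable_on)
       (use assms in \<open>auto simp: l1_bound_def intro!: bdd_aboveI[where M=c]\<close>)
  show "(\<Sum>\<^sub>\<infinity>j. cmod (f j)) \<le> c"
    by (rule infsum_le_finite_sums[OF s]) (use assms in \<open>auto simp: l1_bound_def\<close>)
qed

section \<open>Lattice sums and embeddings into the Wiener algebra\<close>

lemma one_plus_abs_prod_le_knorm_sq:
  assumes "k \<noteq> (0, 0)"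
  shows "(1 + \<bar>real_of_int (fst k)\<bar>) * (1 + \<bar>real_of_int (snd k)\<bar>) \<le> 4 * (knorm k)\<^sup>2"
proof -
  define a where "a = \<bar>real_of_int (fst k)\<bar>"
  define b where "b = \<bar>real_of_int (snd k)\<bar>"
  define m where "m = max a b"
  have "fst k \<noteq> 0 \<or> snd k \<noteq> 0" using assms by (cases k) auto
  hence m1: "1 \<le> m" using one_le_abs_of_int unfolding m_def a_def b_def by fastforce
  have "(1 + a) * (1 + b) \<le> (2 * m) * (2 * m)"
    using m1 by (intro mult_mono) (auto simp: m_def a_def b_def)
  also have "\<dots> = 4 * m\<^sup>2" by (simp add: power2_eq_square)
  also have "m\<^sup>2 \<le> a\<^sup>2 + b\<^sup>2" unfolding m_def by (cases "a \<le> b") (auto simp: max_def)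
  also have "a\<^sup>2 + b\<^sup>2 = (knorm k)\<^sup>2" by (simp add: knorm_squared a_def b_def)
  finally show ?thesis unfolding a_def b_def by simp
qed

lemma sum_powr_one_plus_abs_int_bounded:
  assumes "1 < r"
  obtains S where "0 \<le> S" "\<And>F. finite F \<Longrightarrow> (\<Sum>a\<in>F. (1 + \<bar>real_of_int a\<bar>) powr (-r)) \<le> S"
proof -
  define g where "g n = (1 + real n) powr (-r)" for n :: nat
  have sg: "summable g"
  proof -
    have "summable (\<lambda>n. real n powr (-r))" using assms by (simp add: summable_real_powr_iff)
    hence "summable (\<lambda>n. real (Suc n) powr (-r))" by (subst summable_Suc_iff)
    thus ?thesis unfolding g_def by (simp add: add.commute)
  qed
  have gnn: "0 \<le> g n" for n by (simp add: g_def)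
  have half: "(\<Sum>a\<in>F. (1 + \<bar>real_of_int a\<bar>) powr (-r)) \<le> suminf g"
    if F: "finite F" "inj_on (\<lambda>a. nat \<bar>a\<bar>) F" for F :: "int set"
  proof -
    have "(\<Sum>a\<in>F. (1 + \<bar>real_of_int a\<bar>) powr (-r)) = (\<Sum>a\<in>F. g (nat \<bar>a\<bar>))"
      by (intro sum.cong) (auto simp: g_def)
    also have "\<dots> = sum g ((\<lambda>a. nat \<bar>a\<bar>) ` F)" by (rule sum.reindex[OF F(2), symmetric, unfolded o_def])
    also have "\<dots> \<le> suminf g" by (rule sum_le_suminf[OF sg]) (use F gnn in auto)
    finally show ?thesis .
  qed
  show ?thesis
  proof (rule that[of "2 * suminf g"])
    show "0 \<le> 2 * suminf g" using suminf_nonneg[OF sg gnn] by simp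
    fix F :: "int set" assume F: "finite F"
    let ?F1 = "{a\<in>F. 0 \<le> a}" and ?F2 = "{a\<in>F. a < 0}"
    have "F = ?F1 \<union> ?F2" by auto
    hence "(\<Sum>a\<in>F. (1 + \<bar>real_of_int a\<bar>) powr (-r))
        = (\<Sum>a\<in>?F1. (1 + \<bar>real_of_int a\<bar>) powr (-r)) + (\<Sum>a\<in>?F2. (1 + \<bar>real_of_int a\<bar>) powr (-r))"
      using F by (metis (no_types, lifting) sum.union_disjoint finite_Un disjoint_iff mem_Collect_eq not_le)
    also have "\<dots> \<le> suminf g + suminf g"
      by (intro add_mono half) (use F in \<open>auto simp: inj_on_def\<close>)
    finally show "(\<Sum>a\<in>F. (1 + \<bar>real_of_int a\<bar>) powr (-r)) \<le> 2 * suminf g" by simp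
  qed
qed

lemma knorm_powr_le_one_plus_abs_prod:
  assumes "k \<noteq> (0, 0)" "0 \<le> r"
  shows "knorm k powr (-(2 * r))
    \<le> 4 powr r * ((1 + \<bar>real_of_int (fst k)\<bar>) * (1 + \<bar>real_of_int (snd k)\<bar>)) powr (-r)"
proof -
  define \<rho> where "\<rho> = (1 + \<bar>real_of_int (fst k)\<bar>) * (1 + \<bar>real_of_int (snd k)\<bar>)"
  have \<rho>_pos: "0 < \<rho>" by (simp add: \<rho>_def add_pos_nonneg)
  have sq: "knorm k powr 2 = (knorm k)\<^sup>2" using knorm_pos[OF assms(1)] by simp
  have "knorm k powr (-(2 * r)) = ((knorm k)\<^sup>2) powr (-r)" unfolding sq[symmetric] powr_powr by simp
  also have "\<dots> \<le> (\<rho> / 4) powr (-r)"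
    by (rule powr_mono2') (use assms \<rho>_pos one_plus_abs_prod_le_knorm_sq[OF assms(1)] in \<open>auto simp: \<rho>_def\<close>)
  also have "\<dots> = 4 powr r * \<rho> powr (-r)"
    using \<rho>_pos by (simp add: powr_divide powr_minus divide_simps)
  finally show ?thesis unfolding \<rho>_def .
qed

text \<open>Since \<open>(1 + |k\<^sub>1|)(1 + |k\<^sub>2|) \<le> 4|k|\<^sup>2\<close>, the lattice sum factors into two
  one-dimensional ones.\<close>
lemma lattice_sum_knorm_powr_bounded:
  assumes "1 < r"
  obtains Z where "0 \<le> Z" "\<And>A. finite A \<Longrightarrow> (\<Sum>k\<in>A - {(0, 0)}. knorm k powr (-(2 * r))) \<le> Z"
proof -
  obtain S1 where S1: "0 \<le> S1" "\<And>F. finite F \<Longrightarrow> (\<Sum>a\<in>F. (1 + \<bar>real_of_int a\<bar>) powr (-r)) \<le> S1"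
    using sum_powr_one_plus_abs_int_bounded[OF assms] by blast
  define h where "h a = (1 + \<bar>real_of_int a\<bar>) powr (-r)" for a :: int
  have h_nonneg: "0 \<le> h a" for a by (simp add: h_def)
  show ?thesis
  proof (rule that[of "4 powr r * (S1 * S1)"])
    show "0 \<le> 4 powr r * (S1 * S1)" using S1 by simp
    fix A :: "(int \<times> int) set" assume A: "finite A"
    let ?F = "A - {(0, 0)}"
    have "(\<Sum>k\<in>?F. knorm k powr (-(2 * r))) \<le> (\<Sum>k\<in>?F. 4 powr r * (h (fst k) * h (snd k)))"
      by (intro sum_mono order_trans[OF knorm_powr_le_one_plus_abs_prod])
         (use assms in \<open>auto simp: h_def powr_mult\<close>)
    also have "\<dots> \<le> (\<Sum>k\<in>fst ` ?F \<times> snd ` ?F. 4 powr r * (h (fst k) * h (snd k)))"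
      by (rule sum_mono2) (use A h_nonneg in \<open>auto intro: rev_image_eqI\<close>)
    also have "\<dots> = 4 powr r * (\<Sum>k\<in>fst ` ?F \<times> snd ` ?F. h (fst k) * h (snd k))"
      by (simp add: sum_distrib_left)
    also have "\<dots> = 4 powr r * ((\<Sum>a\<in>fst ` ?F. h a) * (\<Sum>b\<in>snd ` ?F. h b))"
      by (simp add: sum_product sum.cartesian_product case_prod_beta)
    also have "\<dots> \<le> 4 powr r * (S1 * S1)"
      by (intro mult_left_mono mult_mono S1(2)) (use A S1 h_nonneg in \<open>auto simp: h_def intro: sum_nonneg\<close>)
    finally show "(\<Sum>k\<in>?F. knorm k powr (-(2 * r))) \<le> 4 powr r * (S1 * S1)" .
  qed
qed

lemma sum_inverse_one_plus_abs_le_ln: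
  "(\<Sum>a\<in>{-int N..int N}. 1 / (1 + \<bar>real_of_int a\<bar>)) \<le> 1 + 2 * ln (real N + 1)"
proof (induction N)
  case 0 thus ?case by simp
next
  case (Suc N)
  have eq: "{-int (Suc N)..int (Suc N)} = insert (int (Suc N)) (insert (- int (Suc N)) {-int N..int N})"
    by auto
  have step: "1 / (real N + 2) \<le> ln (real N + 2) - ln (real N + 1)"
  proof -
    have "ln ((real N + 1) / (real N + 2)) \<le> (real N + 1) / (real N + 2) - 1" by (rule ln_le_minus_one) simp
    also have "\<dots> = - (1 / (real N + 2))" by (simp add: field_simps)
    finally show ?thesis by (simp add: ln_div)
  qed
  have "(\<Sum>a\<in>{-int (Suc N)..int (Suc N)}. 1 / (1 + \<bar>real_of_int a\<bar>))
      = 1 / (real N + 2) + 1 / (real N + 2) + (\<Sum>a\<in>{-int N..int N}. 1 / (1 + \<bar>real_of_int a\<bar>))"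
    unfolding eq by (simp add: add_ac)
  also have "\<dots> \<le> 2 * (ln (real N + 2) - ln (real N + 1)) + (1 + 2 * ln (real N + 1))"
    using add_mono[OF add_mono[OF step step] Suc.IH] by simp
  finally show ?case by (simp add: add_ac)
qed

lemma sum_knorm_powr_minus_2_le_ln:
  assumes H: "finite H" "\<And>k. k \<in> H \<Longrightarrow> k \<noteq> (0, 0) \<and> knorm k \<le> real N"
  shows "(\<Sum>k\<in>H. knorm k powr (-(2 * 1))) \<le> 4 * (1 + 2 * ln (real N + 1))\<^sup>2"
proof -
  define h where "h a = 1 / (1 + \<bar>real_of_int a\<bar>)" for a :: int
  define B where "B = {-int N..int N} \<times> {-int N..int N}"
  have "(\<Sum>k\<in>H. knorm k powr (-(2 * 1))) \<le> (\<Sum>k\<in>H. 4 * (h (fst k) * h (snd k)))"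
  proof (rule sum_mono)
    fix k assume k: "k \<in> H"
    have k0: "k \<noteq> (0, 0)" using H(2)[OF k] by auto
    have "knorm k powr (-(2 * 1)) = 1 / (knorm k)\<^sup>2"
      using knorm_pos[OF k0] by (simp add: powr_minus powr_realpow divide_inverse)
    also have "\<dots> \<le> 4 / ((1 + \<bar>real_of_int (fst k)\<bar>) * (1 + \<bar>real_of_int (snd k)\<bar>))"
      using one_plus_abs_prod_le_knorm_sq[OF k0] knorm_pos[OF k0]
      by (simp add: divide_simps add_pos_nonneg)
    finally show "knorm k powr (-(2 * 1)) \<le> 4 * (h (fst k) * h (snd k))" by (simp add: h_def)
  qed
  also have "\<dots> \<le> (\<Sum>k\<in>B. 4 * (h (fst k) * h (snd k)))"
  proof (rule sum_mono2)
    show "finite B" by (simp add: B_def)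
    show "H \<subseteq> B"
    proof
      fix k assume k: "k \<in> H"
      have "\<bar>real_of_int (fst k)\<bar> \<le> real N" "\<bar>real_of_int (snd k)\<bar> \<le> real N"
        using abs_fst_le_knorm[of k] abs_snd_le_knorm[of k] H(2)[OF k] by auto
      hence "\<bar>fst k\<bar> \<le> int N" "\<bar>snd k\<bar> \<le> int N" by linarith+
      thus "k \<in> B" unfolding B_def by (cases k) auto
    qed
  qed (auto simp: h_def)
  also have "\<dots> = 4 * (\<Sum>k\<in>B. h (fst k) * h (snd k))" by (simp add: sum_distrib_left)
  also have "\<dots> = 4 * ((\<Sum>a\<in>{-int N..int N}. h a) * (\<Sum>b\<in>{-int N..int N}. h b))"
    by (simp add: B_def sum_product sum.cartesian_product case_prod_beta)
  also have "\<dots> \<le> 4 * ((1 + 2 * ln (real N + 1)) * (1 + 2 * ln (real N + 1)))"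
  proof -
    have le: "(\<Sum>a\<in>{-int N..int N}. h a) \<le> 1 + 2 * ln (real N + 1)"
      using sum_inverse_one_plus_abs_le_ln[of N] by (simp add: h_def)
    have "0 \<le> (\<Sum>a\<in>{-int N..int N}. h a)" by (auto simp: h_def intro!: sum_nonneg)
    thus ?thesis using mult_mono[OF le le] by simp
  qed
  finally show ?thesis by (simp only: power2_eq_square)
qed

lemma sum_cmod_le_Cauchy_Schwarz:
  assumes "H_bound s f b" "finite T" "(0, 0) \<notin> T"
  shows "(\<Sum>k\<in>T. cmod (f k)) \<le> sqrt (\<Sum>k\<in>T. knorm k powr (-(2 * s))) * b"
proof -
  have "(\<Sum>k\<in>T. cmod (f k)) = (\<Sum>k\<in>T. \<bar>knorm k powr (-s)\<bar> * \<bar>knorm k powr s * cmod (f k)\<bar>)"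
  proof (rule sum.cong[OF refl])
    fix k assume "k \<in> T"
    hence "k \<noteq> (0, 0)" using assms(3) by auto
    hence "0 < knorm k" by (rule knorm_pos)
    hence "knorm k powr (-s) * knorm k powr s = 1" by (simp add: powr_add[symmetric])
    thus "cmod (f k) = \<bar>knorm k powr (-s)\<bar> * \<bar>knorm k powr s * cmod (f k)\<bar>"
      by (simp add: abs_mult mult.assoc[symmetric])
  qed
  also have "\<dots> \<le> L2_set (\<lambda>k. knorm k powr (-s)) T * L2_set (\<lambda>k. knorm k powr s * cmod (f k)) T"
    by (rule L2_set_mult_ineq)
  also have "\<dots> \<le> L2_set (\<lambda>k. knorm k powr (-s)) T * b"
    using assms unfolding H_bound_def by (intro mult_left_mono) auto
  also have "L2_set (\<lambda>k. knorm k powr (-s)) T = sqrt (\<Sum>k\<in>T. knorm k powr (-(2 * s)))"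
    unfolding L2_set_def by (simp add: power2_powr)
  finally show ?thesis .
qed

lemma sum_cmod_eq_nonzero_freqs: "f (0, 0) = 0 \<Longrightarrow> (\<Sum>k\<in>A. cmod (f k)) = (\<Sum>k\<in>A - {(0, 0)}. cmod (f k))"
  by (cases "finite A") (auto intro: sum.mono_neutral_right)

lemma l1_bound_of_H_bound:
  assumes "1 < s"
  obtains K where "0 < K" "\<And>f b. H_bound s f b \<Longrightarrow> f (0, 0) = 0 \<Longrightarrow> l1_bound f (K * b)"
proof -
  obtain Z where Z: "0 \<le> Z" "\<And>A. finite A \<Longrightarrow> (\<Sum>k\<in>A - {(0, 0)}. knorm k powr (-(2 * s))) \<le> Z"
    using lattice_sum_knorm_powr_bounded[OF assms] by blast
  show ?thesis
  proof (rule that[of "sqrt Z + 1"])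
    show "0 < sqrt Z + 1" using Z(1) by (simp add: add_nonneg_pos)
    fix f b assume fb: "H_bound s f b" "f (0, 0) = 0"
    have b0: "0 \<le> b" using H_bound_nonneg[OF fb(1)] .
    show "l1_bound f ((sqrt Z + 1) * b)" unfolding l1_bound_def
    proof (intro allI impI)
      fix A :: "(int \<times> int) set" assume A: "finite A"
      have "(\<Sum>k\<in>A. cmod (f k)) = (\<Sum>k\<in>A - {(0, 0)}. cmod (f k))"
        using sum_cmod_eq_nonzero_freqs fb(2) by blast
      also have "\<dots> \<le> sqrt (\<Sum>k\<in>A - {(0, 0)}. knorm k powr (-(2 * s))) * b"
        by (rule sum_cmod_le_Cauchy_Schwarz[OF fb(1)]) (use A in auto)
      also have "\<dots> \<le> sqrt Z * b" using Z(2)[OF A] b0 by (intro mult_right_mono real_sqrt_le_mono)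
      also have "\<dots> \<le> (sqrt Z + 1) * b" using b0 by (simp add: algebra_simps)
      finally show "(\<Sum>k\<in>A. cmod (f k)) \<le> (sqrt Z + 1) * b" .
    qed
  qed
qed

lemma sum_cmod_low_freqs_le:
  assumes fM: "H_bound 1 f M"
    and H: "finite H" "\<And>k. k \<in> H \<Longrightarrow> k \<noteq> (0, 0) \<and> knorm k \<le> real N"
  shows "(\<Sum>k\<in>H. cmod (f k)) \<le> 2 * (1 + 2 * ln (real N + 1)) * M"
proof -
  have "(\<Sum>k\<in>H. knorm k powr (-(2 * 1))) \<le> 4 * (1 + 2 * ln (real N + 1))\<^sup>2"
    by (rule sum_knorm_powr_minus_2_le_ln[OF H])
  also have "\<dots> = (2 * (1 + 2 * ln (real N + 1)))\<^sup>2" by (simp only: power_mult_distrib) simp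
  finally have "sqrt (\<Sum>k\<in>H. knorm k powr (-(2 * 1))) \<le> sqrt ((2 * (1 + 2 * ln (real N + 1)))\<^sup>2)"
    by (rule real_sqrt_le_mono)
  hence "sqrt (\<Sum>k\<in>H. knorm k powr (-(2 * 1))) * M \<le> 2 * (1 + 2 * ln (real N + 1)) * M"
    using H_bound_nonneg[OF fM] by (intro mult_right_mono) simp_all
  moreover have "(\<Sum>k\<in>H. cmod (f k)) \<le> sqrt (\<Sum>k\<in>H. knorm k powr (-(2 * 1))) * M"
    by (rule sum_cmod_le_Cauchy_Schwarz[OF fM H(1)]) (use H(2) in blast)
  ultimately show ?thesis by linarith
qed

lemma sum_cmod_high_freqs_le:
  assumes s1: "1 < s" and fb: "H_bound s f b" and N: "0 < N"
    and T: "finite T" "\<And>k. k \<in> T \<Longrightarrow> k \<noteq> (0, 0) \<and> real N < knorm k"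
    and r: "2 * r = s + 1" and Z: "\<And>A. finite A \<Longrightarrow> (\<Sum>k\<in>A - {(0, 0)}. knorm k powr (-(2 * r))) \<le> Z"
  shows "(\<Sum>k\<in>T. cmod (f k)) \<le> sqrt Z * real N powr (-(s - 1) / 2) * b"
proof -
  have Z0: "0 \<le> Z" using Z[of "{}"] by simp
  have "(\<Sum>k\<in>T. knorm k powr (-(2 * s))) \<le> (\<Sum>k\<in>T. knorm k powr (-(2 * r)) * real N powr (-(s - 1)))"
  proof (rule sum_mono)
    fix k assume "k \<in> T"
    hence kN: "real N < knorm k" using T(2) by blast
    have "knorm k powr (-(2 * s)) = knorm k powr (-(2 * r)) * knorm k powr (-(s - 1))"
      using r by (simp add: powr_add[symmetric] field_simps)
    also have "\<dots> \<le> knorm k powr (-(2 * r)) * real N powr (-(s - 1))"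
      by (intro mult_left_mono powr_mono2') (use s1 N kN in auto)
    finally show "knorm k powr (-(2 * s)) \<le> knorm k powr (-(2 * r)) * real N powr (-(s - 1))" .
  qed
  also have "\<dots> = (\<Sum>k\<in>T. knorm k powr (-(2 * r))) * real N powr (-(s - 1))"
    by (simp add: sum_distrib_right)
  also have "\<dots> \<le> Z * real N powr (-(s - 1))"
  proof -
    have "T - {(0, 0)} = T" using T(2) by blast
    thus ?thesis using Z[OF T(1)] by (intro mult_right_mono) auto
  qed
  also have "\<dots> = (sqrt Z * real N powr (-(s - 1) / 2))\<^sup>2"
  proof -
    have "2 * (-(s - 1) / 2) = -(s - 1)" by simp
    hence "(real N powr (-(s - 1) / 2))\<^sup>2 = real N powr (-(s - 1))" by (simp only: power2_powr)
    thus ?thesis using Z0 by (simp add: power_mult_distrib)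
  qed
  finally have "sqrt (\<Sum>k\<in>T. knorm k powr (-(2 * s))) \<le> sqrt ((sqrt Z * real N powr (-(s - 1) / 2))\<^sup>2)"
    by (rule real_sqrt_le_mono)
  hence "sqrt (\<Sum>k\<in>T. knorm k powr (-(2 * s))) \<le> sqrt Z * real N powr (-(s - 1) / 2)"
    using Z0 by (simp add: abs_mult)
  hence "sqrt (\<Sum>k\<in>T. knorm k powr (-(2 * s))) * b \<le> sqrt Z * real N powr (-(s - 1) / 2) * b"
    using H_bound_nonneg[OF fb] by (intro mult_right_mono) simp_all
  moreover have "(\<Sum>k\<in>T. cmod (f k)) \<le> sqrt (\<Sum>k\<in>T. knorm k powr (-(2 * s))) * b"
    by (rule sum_cmod_le_Cauchy_Schwarz[OF fb T(1)]) (use T(2) in blast)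
  ultimately show ?thesis by linarith
qed

lemma l1_bound_frequency_split:
  assumes s1: "1 < s"
  obtains Z where "0 \<le> Z"
    "\<And>f M b N. f (0, 0) = 0 \<Longrightarrow> H_bound 1 f M \<Longrightarrow> H_bound s f b \<Longrightarrow> 0 < N \<Longrightarrow>
       l1_bound f (2 * (1 + 2 * ln (real N + 1)) * M + sqrt Z * real N powr (-(s - 1) / 2) * b)"
proof -
  define r where "r = (s + 1) / 2"
  have r: "1 < r" "2 * r = s + 1" using s1 by (simp_all add: r_def)
  obtain Z where Z: "0 \<le> Z" "\<And>A. finite A \<Longrightarrow> (\<Sum>k\<in>A - {(0, 0)}. knorm k powr (-(2 * r))) \<le> Z"
    using lattice_sum_knorm_powr_bounded[OF r(1)] by blast
  show ?thesis
  proof (rule that[OF Z(1)])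
    fix f M b and N :: nat
    assume f0: "f (0, 0) = 0" and fM: "H_bound 1 f M" and fb: "H_bound s f b" and N: "0 < N"
    show "l1_bound f (2 * (1 + 2 * ln (real N + 1)) * M + sqrt Z * real N powr (-(s - 1) / 2) * b)"
      unfolding l1_bound_def
    proof (intro allI impI)
      fix A :: "(int \<times> int) set" assume A: "finite A"
      define H where "H = {k\<in>A - {(0, 0)}. knorm k \<le> real N}"
      define T where "T = {k\<in>A - {(0, 0)}. \<not> knorm k \<le> real N}"
      have HT: "A - {(0, 0)} = H \<union> T" "H \<inter> T = {}" by (auto simp: H_def T_def)
      have fin: "finite H" "finite T" using A by (auto simp: H_def T_def)
      have "(\<Sum>k\<in>A. cmod (f k)) = (\<Sum>k\<in>H. cmod (f k)) + (\<Sum>k\<in>T. cmod (f k))"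
        using sum_cmod_eq_nonzero_freqs[of f A, OF f0] sum.union_disjoint[OF fin HT(2)] HT(1) by simp
      also have "(\<Sum>k\<in>H. cmod (f k)) \<le> 2 * (1 + 2 * ln (real N + 1)) * M"
        by (rule sum_cmod_low_freqs_le[OF fM fin(1)]) (simp add: H_def)
      also have "(\<Sum>k\<in>T. cmod (f k)) \<le> sqrt Z * real N powr (-(s - 1) / 2) * b"
        by (rule sum_cmod_high_freqs_le[OF s1 fb N fin(2) _ r(2) Z(2)]) (auto simp: T_def)
      finally show "(\<Sum>k\<in>A. cmod (f k))
          \<le> 2 * (1 + 2 * ln (real N + 1)) * M + sqrt Z * real N powr (-(s - 1) / 2) * b"
        by simp
    qed
  qed
qed

lemma log_cutoff:
  assumes s1: "1 < s" and b0: "0 \<le> b"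
  obtains N :: nat where "0 < N" "real N powr (-(s - 1) / 2) * b \<le> 1"
    "ln (real N + 1) \<le> ln 4 + 2 / (s - 1) * ln (1 + b)"
proof
  define p where "p = 2 / (s - 1)"
  have p0: "0 < p" using s1 by (simp add: p_def)
  define N where "N = nat \<lceil>b powr p\<rceil> + 1"
  have ceil_nonneg: "0 \<le> \<lceil>b powr p\<rceil>" using powr_ge_zero[of b p] by (simp; linarith)
  hence N_eq: "real N = real_of_int \<lceil>b powr p\<rceil> + 1" by (simp add: N_def)
  show N_pos: "0 < N" by (simp add: N_def)
  have bpN: "b powr p \<le> real N" using N_eq le_of_int_ceiling[of "b powr p"] by linarith
  have "p * ((s - 1) / 2) = 1" using s1 by (simp add: p_def field_simps)
  hence "b = (b powr p) powr ((s - 1) / 2)" using b0 by (simp add: powr_powr)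
  also have "\<dots> \<le> real N powr ((s - 1) / 2)" by (rule powr_mono2) (use s1 bpN in auto)
  finally have "real N powr (-(s - 1) / 2) * b \<le> real N powr (-(s - 1) / 2) * real N powr ((s - 1) / 2)"
    by (intro mult_left_mono) auto
  also have "\<dots> = real N powr (-(s - 1) / 2 + (s - 1) / 2)" by (rule powr_add[symmetric])
  also have "\<dots> = 1" using N_pos by (simp add: add_divide_distrib[symmetric])
  finally show "real N powr (-(s - 1) / 2) * b \<le> 1" .
  have "b powr p \<le> (1 + b) powr p" by (rule powr_mono2) (use p0 b0 in auto)
  moreover have "1 \<le> (1 + b) powr p" using p0 b0 by (simp add: ge_one_powr_ge_zero)
  ultimately have "real N + 1 \<le> 4 * (1 + b) powr p"
    using N_eq of_int_ceiling_le_add_one[of "b powr p"] by linarith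
  hence "ln (real N + 1) \<le> ln (4 * (1 + b) powr p)" using N_pos by (subst ln_le_cancel_iff) auto
  also have "\<dots> = ln 4 + p * ln (1 + b)" using b0 by (simp add: ln_mult ln_powr)
  finally show "ln (real N + 1) \<le> ln 4 + 2 / (s - 1) * ln (1 + b)" by (simp add: p_def)
qed

lemma l1_bound_log:
  assumes s1: "1 < s"
  obtains c0 c1 where "0 < c0" "0 < c1"
    "\<And>f M b. f (0, 0) = 0 \<Longrightarrow> H_bound 1 f M \<Longrightarrow> H_bound s f b \<Longrightarrow>
       l1_bound f ((1 + M) * (c0 + c1 * ln (1 + b)))"
proof -
  obtain Z where Z: "0 \<le> Z"
    "\<And>f M b N. f (0, 0) = 0 \<Longrightarrow> H_bound 1 f M \<Longrightarrow> H_bound s f b \<Longrightarrow> 0 < N \<Longrightarrow>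
       l1_bound f (2 * (1 + 2 * ln (real N + 1)) * M + sqrt Z * real N powr (-(s - 1) / 2) * b)"
    using l1_bound_frequency_split[OF s1] by blast
  define p where "p = 2 / (s - 1)"
  have p0: "0 < p" using s1 by (simp add: p_def)
  have ln4: "0 < ln (4::real)" by simp
  have sZ: "0 \<le> sqrt Z" using Z(1) by simp
  show ?thesis
  proof (rule that[of "2 + 4 * ln 4 + sqrt Z" "4 * p"])
    show "0 < 2 + 4 * ln 4 + sqrt Z" using sZ ln4 by linarith
    show "0 < 4 * p" using p0 by simp
    fix f M b assume f0: "f (0, 0) = 0" and fM: "H_bound 1 f M" and fb: "H_bound s f b"
    have M0: "0 \<le> M" and b0: "0 \<le> b" using H_bound_nonneg fM fb by blast+
    obtain N :: nat where N: "0 < N" "real N powr (-(s - 1) / 2) * b \<le> 1"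
      "ln (real N + 1) \<le> ln 4 + p * ln (1 + b)"
      using log_cutoff[OF s1 b0] unfolding p_def by blast
    have "2 * (1 + 2 * ln (real N + 1)) * M + sqrt Z * real N powr (-(s - 1) / 2) * b
        \<le> 2 * (1 + 2 * (ln 4 + p * ln (1 + b))) * M + sqrt Z"
      using N(3) M0 mult_left_mono[OF N(2) sZ] by (intro add_mono mult_right_mono) auto
    also have "\<dots> \<le> (1 + M) * ((2 + 4 * ln 4 + sqrt Z) + 4 * p * ln (1 + b))"
    proof -
      have "0 \<le> 2 + 4 * ln 4 + 4 * p * ln (1 + b)" using ln4 b0 p0 by simp
      moreover have "0 \<le> M * sqrt Z" using M0 sZ by simp
      ultimately show ?thesis by (simp add: algebra_simps)
    qed
    finally show "l1_bound f ((1 + M) * ((2 + 4 * ln 4 + sqrt Z) + 4 * p * ln (1 + b)))"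
      using Z(2)[OF f0 fM fb N(1)] unfolding l1_bound_def by (meson order_trans)
  qed
qed

section \<open>Young's inequality on the lattice\<close>

definition conv :: "(int \<times> int \<Rightarrow> real) \<Rightarrow> (int \<times> int \<Rightarrow> real) \<Rightarrow> int \<times> int \<Rightarrow> real" where
  "conv u v k = (\<Sum>\<^sub>\<infinity>j. u j * v (k - j))"

lemma bij_betw_diff_left: "bij_betw (\<lambda>j. k - j) UNIV (UNIV :: (int \<times> int) set)"
  by (rule bij_betwI[where g="\<lambda>j. k - j"]) auto

lemma summable_on_reindex_diff_left:
  fixes g :: "int \<times> int \<Rightarrow> 'b::{comm_monoid_add,t2_space}"
  shows "(\<lambda>j. g (k - j)) summable_on UNIV \<longleftrightarrow> g summable_on UNIV"
  using summable_on_reindex_bij_betw[OF bij_betw_diff_left, of g k] by (simp add: o_def)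

lemma conv_commute: "conv u v k = conv v u k"
  unfolding conv_def
  using infsum_reindex_bij_betw[OF bij_betw_diff_left, of "\<lambda>j. u j * v (k - j)" k]
  by (simp add: mult.commute)

lemma young_l1_l2_finite:
  fixes u v :: "int \<times> int \<Rightarrow> real"
  assumes u0: "\<And>j. 0 \<le> u j" and vb: "\<And>A. finite A \<Longrightarrow> L2_set v A \<le> c"
    and J: "finite J" and A: "finite A"
  shows "L2_set (\<lambda>k. \<Sum>j\<in>J. u j * v (k - j)) A \<le> (\<Sum>j\<in>J. u j) * c"
  using J
proof (induction J rule: finite_induct)
  case empty thus ?case by (simp add: L2_set_def)
next
  case (insert x J)
  have shift: "L2_set (\<lambda>k. v (k - x)) A \<le> c"
  proof -
    have inj: "inj_on (\<lambda>k. k - x) A" by (rule inj_onI) simp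
    have "L2_set (\<lambda>k. v (k - x)) A = L2_set v ((\<lambda>k. k - x) ` A)"
      unfolding L2_set_def using sum.reindex[OF inj, of "\<lambda>m. (v m)\<^sup>2"] by (simp add: o_def)
    also have "\<dots> \<le> c" by (rule vb) (use A in auto)
    finally show ?thesis .
  qed
  have "L2_set (\<lambda>k. \<Sum>j\<in>insert x J. u j * v (k - j)) A
      = L2_set (\<lambda>k. u x * v (k - x) + (\<Sum>j\<in>J. u j * v (k - j))) A"
    using insert by simp
  also have "\<dots> \<le> L2_set (\<lambda>k. u x * v (k - x)) A + L2_set (\<lambda>k. \<Sum>j\<in>J. u j * v (k - j)) A"
    by (rule L2_set_triangle_ineq)
  also have "L2_set (\<lambda>k. u x * v (k - x)) A = u x * L2_set (\<lambda>k. v (k - x)) A"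
    using u0 by (simp add: L2_set_right_distrib)
  also have "u x * L2_set (\<lambda>k. v (k - x)) A \<le> u x * c"
    using shift u0 by (rule mult_left_mono)
  finally show ?case using insert by (simp add: distrib_right)
qed

lemma young_l1_l2:
  fixes u v :: "int \<times> int \<Rightarrow> real"
  assumes u0: "\<And>j. 0 \<le> u j" and v0: "\<And>j. 0 \<le> v j" and us: "u summable_on UNIV"
    and ub: "\<And>F. finite F \<Longrightarrow> sum u F \<le> c1"
    and vb: "\<And>A. finite A \<Longrightarrow> L2_set v A \<le> c2"
    and A: "finite A"
  shows "L2_set (conv u v) A \<le> c1 * c2"
proof -
  have vc: "v m \<le> c2" for m using vb[of "{m}"] v0[of m] by simp
  have c20: "0 \<le> c2" using vb[of "{}"] by simp
  have sm: "(\<lambda>j. u j * v (k - j)) summable_on UNIV" for k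
  proof (rule summable_on_comparison_test[OF summable_on_cmult_left[OF us, of c2]])
    fix j :: "int \<times> int"
    show "u j * v (k - j) \<le> u j * c2" using mult_left_mono[OF vc u0] .
    show "0 \<le> u j * v (k - j)" using u0 v0 by simp
  qed
  have lim: "((\<lambda>J. L2_set (\<lambda>k. \<Sum>j\<in>J. u j * v (k - j)) A) \<longlongrightarrow> L2_set (conv u v) A)
      (finite_subsets_at_top UNIV)"
  proof -
    have "((\<lambda>J. \<Sum>j\<in>J. u j * v (k - j)) \<longlongrightarrow> conv u v k) (finite_subsets_at_top UNIV)" for k
      using has_sum_infsum[OF sm[of k]] unfolding has_sum_def conv_def .
    thus ?thesis unfolding L2_set_def by (intro tendsto_intros)
  qed
  have "\<forall>\<^sub>F J in finite_subsets_at_top UNIV. L2_set (\<lambda>k. \<Sum>j\<in>J. u j * v (k - j)) A \<le> c1 * c2"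
  proof (rule eventually_finite_subsets_at_top_weakI)
    fix J :: "(int \<times> int) set" assume "finite J" "J \<subseteq> UNIV"
    thus "L2_set (\<lambda>k. \<Sum>j\<in>J. u j * v (k - j)) A \<le> c1 * c2"
      using young_l1_l2_finite[OF u0 vb _ A] ub c20 by (meson mult_right_mono order_trans)
  qed
  thus ?thesis by (rule tendsto_upperbound[OF lim]) simp
qed

section \<open>The quadratic term\<close>

text \<open>\<open>flux f g\<close> is the Fourier transform of \<open>\<nabla> \<cdot> (u g)\<close> with \<open>u\<close> the velocity of \<open>f\<close>, so
  that \<open>flux_div f = flux f f\<close>; \<open>reg_flux \<mu> f g\<close> applies \<open>(1 + \<mu>\<Lambda>)\<^sup>-\<^sup>1\<close> to it.\<close>
definition flux :: "(int \<times> int \<Rightarrow> complex) \<Rightarrow> (int \<times> int \<Rightarrow> complex) \<Rightarrow> int \<times> int \<Rightarrow> complex" where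
  "flux f g k = \<i> * (of_int (fst k) * (\<Sum>\<^sub>\<infinity>j. fst (vel f j) * g (k - j))
                   + of_int (snd k) * (\<Sum>\<^sub>\<infinity>j. snd (vel f j) * g (k - j)))"

definition reg_flux :: "real \<Rightarrow> (int \<times> int \<Rightarrow> complex) \<Rightarrow> (int \<times> int \<Rightarrow> complex) \<Rightarrow> int \<times> int \<Rightarrow> complex" where
  "reg_flux \<mu> f g k = flux f g k / of_real (1 + \<mu> * knorm k)"

lemma flux_div_eq_flux: "flux_div f = flux f f"
  by (rule ext) (simp add: flux_div_def flux_def minus_prod_def)

lemma rQG_integrand_eq_reg_flux:
  "flux_div f k / of_real (1 + \<mu> * knorm k powr (2 * (1/2))) = reg_flux \<mu> f f k"
  by (simp add: reg_flux_def flux_div_eq_flux)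

lemma reg_flux_zero_freq [simp]: "reg_flux \<mu> f g (0, 0) = 0"
  by (simp add: reg_flux_def flux_def)

lemma cmod_vel_le: "cmod (fst (vel f j)) \<le> cmod (f j)" "cmod (snd (vel f j)) \<le> cmod (f j)"
proof -
  have "cmod (fst (vel f j)) \<le> cmod (f j) \<and> cmod (snd (vel f j)) \<le> cmod (f j)"
  proof (cases "j = (0, 0)")
    case True thus ?thesis by (simp add: vel_def)
  next
    case False
    have kp: "0 < knorm j" by (rule knorm_pos[OF False])
    have "cmod (fst (vel f j)) = (\<bar>real_of_int (snd j)\<bar> / knorm j) * cmod (f j)"
      using False kp by (simp add: vel_def norm_mult norm_divide)
    also have "\<dots> \<le> 1 * cmod (f j)"
      using abs_snd_le_knorm[of j] kp by (intro mult_right_mono) auto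
    finally have "cmod (fst (vel f j)) \<le> cmod (f j)" by simp
    moreover have "cmod (snd (vel f j)) = (\<bar>real_of_int (fst j)\<bar> / knorm j) * cmod (f j)"
      using False kp by (simp add: vel_def norm_mult norm_divide)
    moreover have "\<dots> \<le> 1 * cmod (f j)"
      using abs_fst_le_knorm[of j] kp by (intro mult_right_mono) auto
    ultimately show ?thesis by simp
  qed
  thus "cmod (fst (vel f j)) \<le> cmod (f j)" "cmod (snd (vel f j)) \<le> cmod (f j)" by auto
qed

lemma vel_diff:
  "fst (vel (\<lambda>j. f j - g j) j) = fst (vel f j) - fst (vel g j)"
  "snd (vel (\<lambda>j. f j - g j) j) = snd (vel f j) - snd (vel g j)"
  by (simp_all add: vel_def algebra_simps diff_divide_distrib)

lemma vel_uminus: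
  assumes "hermitian f"
  shows "fst (vel f (- j)) = cnj (fst (vel f j))" "snd (vel f (- j)) = cnj (snd (vel f j))"
proof -
  have "f (- j) = cnj (f j)" using assms unfolding hermitian_def by blast
  moreover have "(- j = (0, 0)) = (j = (0, 0))" by (cases j) auto
  ultimately show "fst (vel f (- j)) = cnj (fst (vel f j))" "snd (vel f (- j)) = cnj (snd (vel f j))"
    unfolding vel_def by (simp_all add: complex_cnj_mult)
qed

lemma convolution_summable:
  assumes "l1_bound f L" "\<And>m. cmod (g m) \<le> G" "\<And>j. cmod (a j) \<le> cmod (f j)"
  shows "(\<lambda>j. a j * g (k - j)) summable_on UNIV"
    and "(\<lambda>j. cmod (f j) * cmod (g (k - j))) summable_on UNIV"
proof -
  have s: "(\<lambda>j. cmod (f j) * G) summable_on UNIV"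
    by (rule summable_on_cmult_left[OF l1_bound_summable(1)[OF assms(1)]])
  show s2: "(\<lambda>j. cmod (f j) * cmod (g (k - j))) summable_on UNIV"
    by (rule summable_on_comparison_test[OF s]) (simp_all add: mult_left_mono assms(2))
  show "(\<lambda>j. a j * g (k - j)) summable_on UNIV"
    unfolding summable_on_iff_abs_summable_on_complex
    by (rule summable_on_comparison_test[OF s2]) (simp_all add: norm_mult mult_right_mono assms(3))
qed

lemma infsum_diff:
  fixes f g :: "'a \<Rightarrow> 'b::{topological_ab_group_add, t2_space}"
  assumes "f summable_on A" "g summable_on A"
  shows "(\<Sum>\<^sub>\<infinity>x\<in>A. f x - g x) = infsum f A - infsum g A"
  using infsum_add[OF assms(1), of "\<lambda>x. - g x"] assms(2)
  by (simp add: summable_on_uminus infsum_uminus)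

lemma flux_diff_left:
  assumes f: "l1_bound f Lf" and g: "l1_bound g Lg" and h: "\<And>m. cmod (h m) \<le> H"
  shows "flux (\<lambda>j. f j - g j) h k = flux f h k - flux g h k"
proof -
  have split: "(\<Sum>\<^sub>\<infinity>j. (c f j - c g j) * h (k - j))
      = (\<Sum>\<^sub>\<infinity>j. c f j * h (k - j)) - (\<Sum>\<^sub>\<infinity>j. c g j * h (k - j))"
    if "\<And>F j. cmod (c F j) \<le> cmod (F j)" for c
    using infsum_diff[OF convolution_summable(1)[of f Lf h H "c f" k, OF f h that]
        convolution_summable(1)[of g Lg h H "c g" k, OF g h that]]
    by (simp only: left_diff_distrib)
  show ?thesis
    unfolding flux_def vel_diff
    using split[of "\<lambda>F j. fst (vel F j)", OF cmod_vel_le(1)] split[of "\<lambda>F j. snd (vel F j)", OF cmod_vel_le(2)]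
    by (simp only:) (simp add: algebra_simps)
qed

lemma flux_diff_right:
  assumes f: "l1_bound f L" and g: "\<And>m. cmod (g m) \<le> G" and h: "\<And>m. cmod (h m) \<le> H"
  shows "flux f (\<lambda>j. g j - h j) k = flux f g k - flux f h k"
proof -
  have split: "(\<Sum>\<^sub>\<infinity>j. a j * (g (k - j) - h (k - j)))
      = (\<Sum>\<^sub>\<infinity>j. a j * g (k - j)) - (\<Sum>\<^sub>\<infinity>j. a j * h (k - j))"
    if "\<And>j. cmod (a j) \<le> cmod (f j)" for a
    using infsum_diff[OF convolution_summable(1)[of f L g G a k, OF f g that]
        convolution_summable(1)[of f L h H a k, OF f h that]]
    by (simp only: right_diff_distrib)
  show ?thesis
    unfolding flux_def
    using split[of "\<lambda>j. fst (vel f j)", OF cmod_vel_le(1)] split[of "\<lambda>j. snd (vel f j)", OF cmod_vel_le(2)]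
    by (simp only:) (simp add: algebra_simps)
qed

lemma reg_flux_diag_diff:
  assumes "l1_bound f Lf" "l1_bound g Lg" "\<And>m. cmod (f m) \<le> Gf" "\<And>m. cmod (g m) \<le> Gg"
  shows "reg_flux \<mu> f f k - reg_flux \<mu> g g k
    = reg_flux \<mu> (\<lambda>j. f j - g j) f k + reg_flux \<mu> g (\<lambda>j. f j - g j) k"
proof -
  have "flux f f k - flux g g k = flux (\<lambda>j. f j - g j) f k + flux g (\<lambda>j. f j - g j) k"
    using flux_diff_left[OF assms(1,2,3)] flux_diff_right[OF assms(2,3,4)] by simp
  thus ?thesis unfolding reg_flux_def by (simp add: diff_divide_distrib[symmetric] add_divide_distrib[symmetric])
qed

lemma reg_flux_hermitian:
  assumes h: "hermitian f"
  shows "hermitian (reg_flux \<mu> f f)"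
  unfolding hermitian_def
proof
  fix k :: "int \<times> int"
  have bij: "bij_betw uminus UNIV (UNIV :: (int \<times> int) set)"
    by (rule bij_betwI[where g=uminus]) auto
  have conj: "(\<Sum>\<^sub>\<infinity>j. a j * f (- k - j)) = cnj (\<Sum>\<^sub>\<infinity>j. a j * f (k - j))"
    if a: "\<And>j. a (- j) = cnj (a j)" for a
  proof -
    have "(\<Sum>\<^sub>\<infinity>j. a j * f (- k - j)) = (\<Sum>\<^sub>\<infinity>j. a (- j) * f (- k - - j))"
      using infsum_reindex_bij_betw[OF bij, of "\<lambda>j. a j * f (- k - j)"] by simp
    also have "\<dots> = (\<Sum>\<^sub>\<infinity>j. cnj (a j * f (k - j)))"
      using h unfolding hermitian_def by (intro infsum_cong) (metis a complex_cnj_mult minus_diff_eq diff_minus_eq_add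
          uminus_add_conv_diff)
    also have "\<dots> = cnj (\<Sum>\<^sub>\<infinity>j. a j * f (k - j))" by (rule infsum_cnj)
    finally show ?thesis .
  qed
  show "reg_flux \<mu> f f (- k) = cnj (reg_flux \<mu> f f k)"
    unfolding reg_flux_def flux_def
    using conj[of "\<lambda>j. fst (vel f j)", OF vel_uminus(1)[OF h]]
      conj[of "\<lambda>j. snd (vel f j)", OF vel_uminus(2)[OF h]]
    by (simp add: algebra_simps)
qed

lemma cmod_flux_le:
  assumes "l1_bound f L" "\<And>m. cmod (g m) \<le> G"
  shows "cmod (flux f g k) \<le> 2 * knorm k * (\<Sum>\<^sub>\<infinity>j. cmod (f j) * cmod (g (k - j)))"
proof -
  define P where "P = (\<Sum>\<^sub>\<infinity>j. cmod (f j) * cmod (g (k - j)))"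
  have sP: "(\<lambda>j. cmod (f j) * cmod (g (k - j))) summable_on UNIV"
    by (rule convolution_summable(2)[of f L g G f k, OF assms]) simp
  have conv_le: "cmod (\<Sum>\<^sub>\<infinity>j. a j * g (k - j)) \<le> P" if a: "\<And>j. cmod (a j) \<le> cmod (f j)" for a
    unfolding P_def
    by (rule norm_infsum_le[OF has_sum_infsum[OF convolution_summable(1)[OF assms a]] has_sum_infsum[OF sP]])
       (simp add: norm_mult mult_right_mono a)
  have P0: "0 \<le> P" unfolding P_def by (rule infsum_nonneg) simp
  define T1 where "T1 = (\<Sum>\<^sub>\<infinity>j. fst (vel f j) * g (k - j))"
  define T2 where "T2 = (\<Sum>\<^sub>\<infinity>j. snd (vel f j) * g (k - j))"
  have "cmod (flux f g k) = cmod (of_int (fst k) * T1 + of_int (snd k) * T2)"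
    by (simp add: flux_def norm_mult T1_def T2_def)
  also have "\<dots> \<le> cmod (of_int (fst k) * T1) + cmod (of_int (snd k) * T2)" by (rule norm_triangle_ineq)
  also have "\<dots> = \<bar>real_of_int (fst k)\<bar> * cmod T1 + \<bar>real_of_int (snd k)\<bar> * cmod T2"
    by (simp add: norm_mult)
  also have "\<dots> \<le> knorm k * P + knorm k * P"
    unfolding T1_def T2_def
    by (intro add_mono mult_mono abs_fst_le_knorm abs_snd_le_knorm conv_le cmod_vel_le) (auto simp: P0)
  finally show ?thesis unfolding P_def by simp
qed

text \<open>The smoothing \<open>(1 + \<mu>\<Lambda>)\<^sup>-\<^sup>1\<close> absorbs the derivative in \<open>\<nabla> \<cdot> (u g)\<close>: this is where
  \<open>\<alpha> = 1/2\<close> is used.\<close>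
lemma cmod_reg_flux_le:
  assumes "0 < \<mu>" "l1_bound f L" "\<And>m. cmod (g m) \<le> G"
  shows "cmod (reg_flux \<mu> f g k) \<le> (2 / \<mu>) * (\<Sum>\<^sub>\<infinity>j. cmod (f j) * cmod (g (k - j)))"
proof -
  define P where "P = (\<Sum>\<^sub>\<infinity>j. cmod (f j) * cmod (g (k - j)))"
  have P0: "0 \<le> P" unfolding P_def by (rule infsum_nonneg) simp
  have d: "0 < 1 + \<mu> * knorm k" using assms(1) by (simp add: add_pos_nonneg)
  have "cmod (reg_flux \<mu> f g k) = cmod (flux f g k) / (1 + \<mu> * knorm k)"
    using d by (simp only: reg_flux_def norm_divide norm_of_real abs_of_pos)
  also have "\<dots> \<le> 2 * knorm k * P / (1 + \<mu> * knorm k)"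
    using cmod_flux_le[of f L g G k, OF assms(2,3)] d unfolding P_def by (simp add: divide_right_mono)
  also have "\<dots> \<le> (2 / \<mu>) * P"
    using d assms(1) P0 by (simp add: divide_simps) (simp add: algebra_simps mult_left_mono)
  finally show ?thesis unfolding P_def .
qed

lemma weighted_reg_flux_le_conv:
  assumes mu: "0 < \<mu>" and s: "0 \<le> s" and g0: "g (0, 0) = 0"
    and fb: "H_bound s f bf" and gb: "H_bound s g bg" and fl: "l1_bound f Lf" and gl: "l1_bound g Lg"
  defines "Wf \<equiv> \<lambda>j. knorm j powr s * cmod (f j)" and "Wg \<equiv> \<lambda>j. knorm j powr s * cmod (g j)"
  shows "knorm k powr s * cmod (reg_flux \<mu> f g k)
    \<le> (2 / \<mu>) * 2 powr s * (conv (\<lambda>j. cmod (g j)) Wf k + conv (\<lambda>j. cmod (f j)) Wg k)"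
proof -
  define af where "af j = cmod (f j)" for j
  define ag where "ag j = cmod (g j)" for j
  have gG: "cmod (g m) \<le> bg" for m by (rule H_bound_coeff[OF gb s g0])
  have saf: "af summable_on UNIV" unfolding af_def by (rule l1_bound_summable(1)[OF fl])
  have sag: "(\<lambda>j. ag (k - j)) summable_on UNIV"
    using summable_on_reindex_diff_left[of ag k] l1_bound_summable(1)[OF gl] unfolding ag_def by blast
  have s1: "(\<lambda>j. Wf j * ag (k - j)) summable_on UNIV"
    by (rule summable_on_comparison_test[OF summable_on_cmult_right[OF sag, of bf]])
       (auto simp: Wf_def ag_def intro!: mult_right_mono H_bound_weighted_coeff[OF fb])
  have s2: "(\<lambda>j. af j * Wg (k - j)) summable_on UNIV"
    by (rule summable_on_comparison_test[OF summable_on_cmult_left[OF saf, of bg]])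
       (auto simp: Wg_def af_def intro!: mult_left_mono H_bound_weighted_coeff[OF gb])
  have sP: "(\<lambda>j. af j * ag (k - j)) summable_on UNIV"
    unfolding af_def ag_def by (rule convolution_summable(2)[of f Lf g bg f k, OF fl gG]) simp
  have "knorm k powr s * cmod (reg_flux \<mu> f g k) \<le> knorm k powr s * ((2 / \<mu>) * (\<Sum>\<^sub>\<infinity>j. af j * ag (k - j)))"
    unfolding af_def ag_def by (rule mult_left_mono[OF cmod_reg_flux_le[OF mu fl gG]]) simp
  also have "\<dots> = (2 / \<mu>) * (\<Sum>\<^sub>\<infinity>j. knorm k powr s * (af j * ag (k - j)))"
    by (simp add: infsum_cmult_right[OF sP])
  also have "\<dots> \<le> (2 / \<mu>) * (\<Sum>\<^sub>\<infinity>j. 2 powr s * (Wf j * ag (k - j) + af j * Wg (k - j)))"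
  proof (rule mult_left_mono[OF infsum_mono])
    show "(\<lambda>j. knorm k powr s * (af j * ag (k - j))) summable_on UNIV"
      by (rule summable_on_cmult_right[OF sP])
    show "(\<lambda>j. 2 powr s * (Wf j * ag (k - j) + af j * Wg (k - j))) summable_on UNIV"
      by (rule summable_on_cmult_right[OF summable_on_add[OF s1 s2]])
    fix j :: "int \<times> int"
    have "knorm k powr s * (af j * ag (k - j))
        \<le> (2 powr s * (knorm j powr s + knorm (k - j) powr s)) * (af j * ag (k - j))"
      by (rule mult_right_mono[OF knorm_powr_le_diff[OF s]]) (simp add: af_def ag_def)
    thus "knorm k powr s * (af j * ag (k - j)) \<le> 2 powr s * (Wf j * ag (k - j) + af j * Wg (k - j))"
      by (simp add: Wf_def Wg_def af_def ag_def algebra_simps)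
  qed (use mu in simp)
  also have "(\<Sum>\<^sub>\<infinity>j. 2 powr s * (Wf j * ag (k - j) + af j * Wg (k - j)))
      = 2 powr s * (conv ag Wf k + conv af Wg k)"
    using conv_commute[of Wf ag k]
    by (simp add: infsum_cmult_right[OF summable_on_add[OF s1 s2]] infsum_add[OF s1 s2] conv_def)
  finally show ?thesis by (simp add: af_def[abs_def] ag_def[abs_def] mult.assoc)
qed

lemma reg_flux_H_bound:
  assumes mu: "0 < \<mu>" and s: "0 \<le> s" and g0: "g (0, 0) = 0"
    and fb: "H_bound s f bf" and gb: "H_bound s g bg" and fl: "l1_bound f Lf" and gl: "l1_bound g Lg"
  shows "H_bound s (reg_flux \<mu> f g) ((2 * 2 powr s / \<mu>) * (Lg * bf + Lf * bg))"
  unfolding H_bound_def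
proof (intro allI impI)
  fix A :: "(int \<times> int) set" assume A: "finite A"
  define Wf where "Wf j = knorm j powr s * cmod (f j)" for j
  define Wg where "Wg j = knorm j powr s * cmod (g j)" for j
  define c where "c = 2 / \<mu> * 2 powr s"
  have c0: "0 \<le> c" using mu by (simp add: c_def)
  have y1: "L2_set (conv (\<lambda>j. cmod (g j)) Wf) A \<le> Lg * bf"
    by (rule young_l1_l2[OF _ _ l1_bound_summable(1)[OF gl] _ _ A])
       (use gl fb in \<open>auto simp: Wf_def[abs_def] l1_bound_def H_bound_def\<close>)
  have y2: "L2_set (conv (\<lambda>j. cmod (f j)) Wg) A \<le> Lf * bg"
    by (rule young_l1_l2[OF _ _ l1_bound_summable(1)[OF fl] _ _ A])
       (use fl gb in \<open>auto simp: Wg_def[abs_def] l1_bound_def H_bound_def\<close>)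
  have "L2_set (\<lambda>k. knorm k powr s * cmod (reg_flux \<mu> f g k)) A
      \<le> L2_set (\<lambda>k. c * (conv (\<lambda>j. cmod (g j)) Wf k + conv (\<lambda>j. cmod (f j)) Wg k)) A"
    using weighted_reg_flux_le_conv[OF mu s g0 fb gb fl gl]
    by (intro L2_set_mono) (simp_all add: c_def Wf_def[abs_def] Wg_def[abs_def])
  also have "\<dots> = c * L2_set (\<lambda>k. conv (\<lambda>j. cmod (g j)) Wf k + conv (\<lambda>j. cmod (f j)) Wg k) A"
    using c0 by (simp add: L2_set_right_distrib)
  also have "\<dots> \<le> c * (Lg * bf + Lf * bg)"
    using order_trans[OF L2_set_triangle_ineq add_mono[OF y1 y2]] c0 by (rule mult_left_mono)
  finally show "L2_set (\<lambda>k. knorm k powr s * cmod (reg_flux \<mu> f g k)) A \<le> (2 * 2 powr s / \<mu>) * (Lg * bf + Lf * bg)"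
    by (simp add: c_def)
qed

section \<open>Local existence by Picard iteration\<close>

text \<open>Pairing the integral
  with its own weighted conjugate \<open>h\<close> reduces it to the scalar bound
  \<open>S = \<integral> h \<le> (b - a) c \<surd>S\<close>.\<close>
lemma H_bound_integral:
  assumes ab: "a \<le> b" and int: "\<And>k. (\<lambda>\<sigma>. g \<sigma> k) integrable_on {a..b}"
    and bnd: "\<And>\<sigma>. \<sigma> \<in> {a..b} \<Longrightarrow> H_bound s (g \<sigma>) c"
  shows "H_bound s (\<lambda>k. integral {a..b} (\<lambda>\<sigma>. g \<sigma> k)) ((b - a) * c)"
  unfolding H_bound_def
proof (intro allI impI)
  fix A :: "(int \<times> int) set" assume A: "finite A"
  define I where "I k = integral {a..b} (\<lambda>\<sigma>. g \<sigma> k)" for k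
  define w where "w k = knorm k powr s" for k
  define S where "S = (\<Sum>k\<in>A. (w k * cmod (I k))\<^sup>2)"
  have c0: "0 \<le> c" using bnd[of a] ab H_bound_nonneg by auto
  have S0: "0 \<le> S" unfolding S_def by (rule sum_nonneg) simp
  have L2_eq: "L2_set (\<lambda>k. w k * cmod (I k)) A = sqrt S" by (simp add: L2_set_def S_def)
  define h where "h \<sigma> = (\<Sum>k\<in>A. of_real ((w k)\<^sup>2) * cnj (I k) * g \<sigma> k)" for \<sigma>
  have h_int: "h integrable_on {a..b}"
    unfolding h_def by (intro integrable_sum A) (simp add: integrable_on_mult_right int mult.assoc)
  have "integral {a..b} h = (\<Sum>k\<in>A. of_real ((w k)\<^sup>2) * cnj (I k) * I k)"
    unfolding h_def I_def
    by (subst integral_sum[OF A]) (simp_all add: integrable_on_mult_right int mult.assoc)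
  also have "\<dots> = of_real S"
    by (simp add: S_def mult.assoc power_mult_distrib complex_norm_square[symmetric] mult.commute[of "cnj _"])
  finally have h_integral: "integral {a..b} h = of_real S" .
  have h_bound: "cmod (h \<sigma>) \<le> sqrt S * c" if \<sigma>: "\<sigma> \<in> {a..b}" for \<sigma>
  proof -
    have "cmod (h \<sigma>) \<le> (\<Sum>k\<in>A. \<bar>w k * cmod (I k)\<bar> * \<bar>w k * cmod (g \<sigma> k)\<bar>)"
      unfolding h_def using norm_sum
      by (rule order_trans) (simp add: norm_mult power2_eq_square abs_mult w_def mult_ac)
    also have "\<dots> \<le> L2_set (\<lambda>k. w k * cmod (I k)) A * L2_set (\<lambda>k. w k * cmod (g \<sigma> k)) A"
      by (rule L2_set_mult_ineq)
    also have "\<dots> \<le> sqrt S * c"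
      unfolding L2_eq using bnd[OF \<sigma>] A S0 by (intro mult_left_mono) (auto simp: H_bound_def w_def)
    finally show ?thesis .
  qed
  have "(h has_integral of_real S) (cbox a b)"
    using integrable_integral[OF h_int] unfolding h_integral by (simp add: cbox_interval)
  hence "S \<le> sqrt S * c * (b - a)"
    using has_integral_bound[of "sqrt S * c" h "of_real S" a b] h_bound S0 c0 ab
    by (simp add: cbox_interval content_real)
  hence SS: "sqrt S * sqrt S \<le> sqrt S * ((b - a) * c)" using S0 by (simp add: algebra_simps)
  have "sqrt S \<le> (b - a) * c"
  proof (cases "S = 0")
    case False
    hence "0 < sqrt S" using S0 by simp
    thus ?thesis using SS mult_le_cancel_left_pos by blast
  qed (use c0 ab in simp)
  thus "L2_set (\<lambda>k. knorm k powr s * cmod (integral {a..b} (\<lambda>\<sigma>. g \<sigma> k))) A \<le> (b - a) * c"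
    using L2_eq by (simp add: w_def I_def)
qed

locale rqg_bilinear =
  fixes \<mu> s C :: real
  assumes s_gt_1: "1 < s" and C_pos: "0 < C"
    and reg_flux_H_bound_product: "\<And>f g bf bg. f (0, 0) = 0 \<Longrightarrow> g (0, 0) = 0 \<Longrightarrow>
      H_bound s f bf \<Longrightarrow> H_bound s g bg \<Longrightarrow> H_bound s (reg_flux \<mu> f g) (C * bf * bg)"
begin

lemma s_nonneg: "0 \<le> s"
  using s_gt_1 by simp

lemma reg_flux_lipschitz:
  assumes f0: "f (0, 0) = 0" and g0: "g (0, 0) = 0" and fb: "H_bound s f R1" and gb: "H_bound s g R2"
    and d: "H_bound s (\<lambda>k. f k - g k) d"
  shows "H_bound s (\<lambda>k. reg_flux \<mu> f f k - reg_flux \<mu> g g k) (C * (R1 + R2) * d)"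
proof -
  obtain K where K: "\<And>f b. H_bound s f b \<Longrightarrow> f (0, 0) = 0 \<Longrightarrow> l1_bound f (K * b)"
    using l1_bound_of_H_bound[OF s_gt_1] by blast
  have eq: "reg_flux \<mu> f f k - reg_flux \<mu> g g k
      = reg_flux \<mu> (\<lambda>j. f j - g j) f k + reg_flux \<mu> g (\<lambda>j. f j - g j) k" for k
    by (rule reg_flux_diag_diff[OF K[OF fb f0] K[OF gb g0] H_bound_coeff[OF fb s_nonneg f0]
          H_bound_coeff[OF gb s_nonneg g0]])
  have h0: "(\<lambda>j. f j - g j) (0, 0) = 0" using f0 g0 by simp
  have "H_bound s (\<lambda>k. reg_flux \<mu> (\<lambda>j. f j - g j) f k + reg_flux \<mu> g (\<lambda>j. f j - g j) k)
      (C * d * R1 + C * R2 * d)"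
    by (rule H_bound_add[OF reg_flux_H_bound_product[OF h0 f0 d fb] reg_flux_H_bound_product[OF g0 h0 gb d]])
  thus ?thesis by (rule H_bound_cong[OF H_bound_mono]) (auto simp: eq algebra_simps)
qed

lemma reg_flux_path_continuous:
  assumes z: "\<And>\<sigma>. \<sigma> \<in> {a..b} \<Longrightarrow> \<psi> \<sigma> (0, 0) = 0"
    and B: "\<And>\<sigma>. \<sigma> \<in> {a..b} \<Longrightarrow> H_bound s (\<psi> \<sigma>) R"
    and L: "\<And>\<sigma> \<tau>. \<sigma> \<in> {a..b} \<Longrightarrow> \<tau> \<in> {a..b} \<Longrightarrow> H_bound s (\<lambda>k. \<psi> \<sigma> k - \<psi> \<tau> k) (\<bar>\<sigma> - \<tau>\<bar> * L)"
  shows "continuous_on {a..b} (\<lambda>\<sigma>. reg_flux \<mu> (\<psi> \<sigma>) (\<psi> \<sigma>) k)"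
proof (rule lipschitz_on_continuous_on)
  show "lipschitz_on (C * (2 * max R 0) * max L 0) {a..b} (\<lambda>\<sigma>. reg_flux \<mu> (\<psi> \<sigma>) (\<psi> \<sigma>) k)"
    unfolding lipschitz_on_def
  proof (intro conjI ballI)
    show "0 \<le> C * (2 * max R 0) * max L 0" using C_pos by simp
    fix \<sigma> \<tau> assume st: "\<sigma> \<in> {a..b}" "\<tau> \<in> {a..b}"
    have R0: "0 \<le> R" using B[OF st(1)] H_bound_nonneg by auto
    have "cmod (reg_flux \<mu> (\<psi> \<sigma>) (\<psi> \<sigma>) k - reg_flux \<mu> (\<psi> \<tau>) (\<psi> \<tau>) k) \<le> C * (R + R) * (\<bar>\<sigma> - \<tau>\<bar> * L)"
      by (rule H_bound_coeff[OF reg_flux_lipschitz[OF z[OF st(1)] z[OF st(2)] B[OF st(1)] B[OF st(2)]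
            L[OF st]] s_nonneg]) simp
    also have "\<dots> \<le> C * (R + R) * (\<bar>\<sigma> - \<tau>\<bar> * max L 0)"
      using C_pos R0 by (intro mult_left_mono) auto
    also have "\<dots> = C * (2 * max R 0) * max L 0 * dist \<sigma> \<tau>"
      using R0 by (simp add: dist_real_def)
    finally show "dist (reg_flux \<mu> (\<psi> \<sigma>) (\<psi> \<sigma>) k) (reg_flux \<mu> (\<psi> \<tau>) (\<psi> \<tau>) k)
        \<le> C * (2 * max R 0) * max L 0 * dist \<sigma> \<tau>"
      by (simp add: dist_norm)
  qed
qed

definition picard_map ::
  "real \<Rightarrow> (int \<times> int \<Rightarrow> complex) \<Rightarrow> (real \<Rightarrow> int \<times> int \<Rightarrow> complex) \<Rightarrow> real \<Rightarrow> int \<times> int \<Rightarrow> complex"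
  where "picard_map a f0 Q t k = f0 k - integral {a..t} (\<lambda>\<sigma>. reg_flux \<mu> (Q \<sigma>) (Q \<sigma>) k)"

definition admissible :: "real set \<Rightarrow> real \<Rightarrow> real \<Rightarrow> (real \<Rightarrow> int \<times> int \<Rightarrow> complex) \<Rightarrow> bool" where
  "admissible J R L Q \<longleftrightarrow>
     (\<forall>\<sigma>\<in>J. hermitian (Q \<sigma>) \<and> Q \<sigma> (0, 0) = 0 \<and> H_bound s (Q \<sigma>) R) \<and>
     (\<forall>\<sigma>\<in>J. \<forall>\<tau>\<in>J. H_bound s (\<lambda>k. Q \<sigma> k - Q \<tau> k) (\<bar>\<sigma> - \<tau>\<bar> * L))"

lemma admissibleD:
  assumes "admissible J R L Q" "\<sigma> \<in> J"
  shows "hermitian (Q \<sigma>)" "Q \<sigma> (0, 0) = 0" "H_bound s (Q \<sigma>) R"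
    and "\<tau> \<in> J \<Longrightarrow> H_bound s (\<lambda>k. Q \<sigma> k - Q \<tau> k) (\<bar>\<sigma> - \<tau>\<bar> * L)"
  using assms unfolding admissible_def by auto

lemma admissible_continuous:
  "admissible {a..b} R L Q \<Longrightarrow> continuous_on {a..b} (\<lambda>\<sigma>. reg_flux \<mu> (Q \<sigma>) (Q \<sigma>) k)"
  by (rule reg_flux_path_continuous[where R=R and L=L]) (auto dest: admissibleD)

lemma admissible_integrable:
  "admissible {a..b} R L Q \<Longrightarrow> {c..d} \<subseteq> {a..b} \<Longrightarrow> (\<lambda>\<sigma>. reg_flux \<mu> (Q \<sigma>) (Q \<sigma>) k) integrable_on {c..d}"
  by (rule integrable_subinterval_real[OF integrable_continuous_interval[OF admissible_continuous]])

end

lemma rqg_bilinear_exists: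
  assumes "0 < \<mu>" "1 < s"
  shows "\<exists>C. rqg_bilinear \<mu> s C"
proof -
  obtain K where K: "0 < K" "\<And>f b. H_bound s f b \<Longrightarrow> f (0, 0) = 0 \<Longrightarrow> l1_bound f (K * b)"
    using l1_bound_of_H_bound[OF assms(2)] by blast
  have "rqg_bilinear \<mu> s (4 * 2 powr s / \<mu> * K)"
  proof
    show "1 < s" "0 < 4 * 2 powr s / \<mu> * K" using assms K(1) by simp_all
    fix f g bf bg
    assume f0: "f (0, 0) = 0" and g0: "g (0, 0) = 0" and fb: "H_bound s f bf" and gb: "H_bound s g bg"
    have "H_bound s (reg_flux \<mu> f g) ((2 * 2 powr s / \<mu>) * ((K * bg) * bf + (K * bf) * bg))"
      using assms by (intro reg_flux_H_bound g0 fb gb K(2) f0) simp_all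
    thus "H_bound s (reg_flux \<mu> f g) (4 * 2 powr s / \<mu> * K * bf * bg)"
      by (simp add: algebra_simps)
  qed
  thus ?thesis ..
qed

text \<open>One Picard step on \<open>[a, a + dt]\<close>, with \<open>dt = 1/(8CR)\<close> chosen so that the map sends
  the admissible paths through \<open>f\<^sub>0\<close> into themselves and contracts by the factor \<open>1/2\<close>.\<close>
locale picard = rqg_bilinear +
  fixes a R :: real and f0 :: "int \<times> int \<Rightarrow> complex"
  assumes R_pos: "0 < R" and f0_hermitian: "hermitian f0" and f0_zero: "f0 (0, 0) = 0"
    and f0_bound: "H_bound s f0 R"
begin

definition dt :: real where "dt = 1 / (8 * C * R)"

definition Lip :: real where "Lip = 4 * C * R\<^sup>2"

lemma dt_pos: "0 < dt"
  using C_pos R_pos by (simp add: dt_def)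

lemma Lip_nonneg: "0 \<le> Lip"
  using C_pos by (simp add: Lip_def)

lemma dt_Lip: "dt * Lip = R / 2"
  using C_pos R_pos by (simp add: dt_def Lip_def field_simps power2_eq_square)

lemma integral_reg_flux_H_bound:
  assumes Q: "admissible {a..a + dt} (2 * R) Lip Q" and cd: "a \<le> c" "c \<le> d" "d \<le> a + dt"
  shows "H_bound s (\<lambda>k. integral {c..d} (\<lambda>\<sigma>. reg_flux \<mu> (Q \<sigma>) (Q \<sigma>) k)) ((d - c) * Lip)"
proof (rule H_bound_integral[OF cd(2)])
  show "(\<lambda>\<sigma>. reg_flux \<mu> (Q \<sigma>) (Q \<sigma>) k) integrable_on {c..d}" for k
    by (rule admissible_integrable[OF Q]) (use cd in auto)
  fix \<sigma> assume "\<sigma> \<in> {c..d}"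
  hence \<sigma>: "\<sigma> \<in> {a..a + dt}" using cd by auto
  show "H_bound s (reg_flux \<mu> (Q \<sigma>) (Q \<sigma>)) Lip"
    using reg_flux_H_bound_product[OF admissibleD(2)[OF Q \<sigma>] admissibleD(2)[OF Q \<sigma>]
        admissibleD(3)[OF Q \<sigma>] admissibleD(3)[OF Q \<sigma>]]
    by (simp add: Lip_def power2_eq_square algebra_simps)
qed

lemma picard_map_diff_initial:
  assumes Q: "admissible {a..a + dt} (2 * R) Lip Q" and t: "t \<in> {a..a + dt}"
  shows "H_bound s (\<lambda>k. picard_map a f0 Q t k - f0 k) (R / 2)"
proof -
  have "H_bound s (\<lambda>k. integral {a..t} (\<lambda>\<sigma>. reg_flux \<mu> (Q \<sigma>) (Q \<sigma>) k)) ((t - a) * Lip)"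
    by (rule integral_reg_flux_H_bound[OF Q]) (use t in auto)
  moreover have "(t - a) * Lip \<le> R / 2"
    using t Lip_nonneg dt_Lip mult_right_mono[of "t - a" dt Lip] by simp
  ultimately show ?thesis by (auto simp: picard_map_def intro: H_bound_uminus H_bound_mono)
qed

lemma picard_map_lipschitz:
  assumes Q: "admissible {a..a + dt} (2 * R) Lip Q"
    and \<tau>t: "\<tau> \<in> {a..a + dt}" "t \<in> {a..a + dt}" "\<tau> \<le> t"
  shows "H_bound s (\<lambda>k. picard_map a f0 Q t k - picard_map a f0 Q \<tau> k) ((t - \<tau>) * Lip)"
proof -
  have "integral {a..\<tau>} (\<lambda>\<sigma>. reg_flux \<mu> (Q \<sigma>) (Q \<sigma>) k) + integral {\<tau>..t} (\<lambda>\<sigma>. reg_flux \<mu> (Q \<sigma>) (Q \<sigma>) k)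
      = integral {a..t} (\<lambda>\<sigma>. reg_flux \<mu> (Q \<sigma>) (Q \<sigma>) k)" for k
    by (rule Henstock_Kurzweil_Integration.integral_combine)
       (use \<tau>t in \<open>auto intro!: admissible_integrable[OF Q]\<close>)
  hence eq: "picard_map a f0 Q t k - picard_map a f0 Q \<tau> k
      = - integral {\<tau>..t} (\<lambda>\<sigma>. reg_flux \<mu> (Q \<sigma>) (Q \<sigma>) k)" for k
    unfolding picard_map_def by (simp add: algebra_simps)
  have "H_bound s (\<lambda>k. integral {\<tau>..t} (\<lambda>\<sigma>. reg_flux \<mu> (Q \<sigma>) (Q \<sigma>) k)) ((t - \<tau>) * Lip)"
    by (rule integral_reg_flux_H_bound[OF Q]) (use \<tau>t in auto)
  thus ?thesis unfolding eq by (rule H_bound_uminus)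
qed

lemma picard_map_hermitian:
  assumes Q: "admissible {a..a + dt} (2 * R) Lip Q" and t: "t \<in> {a..a + dt}"
  shows "hermitian (picard_map a f0 Q t)"
  unfolding hermitian_def
proof
  fix k :: "int \<times> int"
  have "integral {a..t} (\<lambda>\<sigma>. reg_flux \<mu> (Q \<sigma>) (Q \<sigma>) (- k))
      = integral {a..t} (\<lambda>\<sigma>. cnj (reg_flux \<mu> (Q \<sigma>) (Q \<sigma>) k))"
  proof (rule integral_cong)
    fix \<sigma> assume "\<sigma> \<in> {a..t}"
    hence "hermitian (reg_flux \<mu> (Q \<sigma>) (Q \<sigma>))"
      using t by (intro reg_flux_hermitian admissibleD(1)[OF Q]) auto
    thus "reg_flux \<mu> (Q \<sigma>) (Q \<sigma>) (- k) = cnj (reg_flux \<mu> (Q \<sigma>) (Q \<sigma>) k)"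
      unfolding hermitian_def by blast
  qed
  also have "\<dots> = cnj (integral {a..t} (\<lambda>\<sigma>. reg_flux \<mu> (Q \<sigma>) (Q \<sigma>) k))"
    by (rule integral_cnj[symmetric])
  moreover have "f0 (- k) = cnj (f0 k)" using f0_hermitian unfolding hermitian_def by blast
  ultimately show "picard_map a f0 Q t (- k) = cnj (picard_map a f0 Q t k)"
    unfolding picard_map_def by simp
qed

lemma picard_map_admissible:
  assumes Q: "admissible {a..a + dt} (2 * R) Lip Q"
  shows "admissible {a..a + dt} (2 * R) Lip (picard_map a f0 Q)"
  unfolding admissible_def
proof (intro conjI ballI)
  fix t assume t: "t \<in> {a..a + dt}"
  show "hermitian (picard_map a f0 Q t)" by (rule picard_map_hermitian[OF Q t])
  show "picard_map a f0 Q t (0, 0) = 0" by (simp add: picard_map_def f0_zero)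
  have "H_bound s (\<lambda>k. f0 k + (picard_map a f0 Q t k - f0 k)) (R + R / 2)"
    by (rule H_bound_add[OF f0_bound picard_map_diff_initial[OF Q t]])
  thus "H_bound s (picard_map a f0 Q t) (2 * R)"
    using R_pos by (auto elim: H_bound_cong[OF H_bound_mono])
  fix \<tau> assume \<tau>: "\<tau> \<in> {a..a + dt}"
  show "H_bound s (\<lambda>k. picard_map a f0 Q t k - picard_map a f0 Q \<tau> k) (\<bar>t - \<tau>\<bar> * Lip)"
  proof (cases "\<tau> \<le> t")
    case True thus ?thesis using picard_map_lipschitz[OF Q \<tau> t] by simp
  next
    case False thus ?thesis
      using H_bound_diff_commute[OF picard_map_lipschitz[OF Q t \<tau>]] by simp
  qed
qed

lemma picard_map_contraction:
  assumes Q1: "admissible {a..a + dt} (2 * R) Lip Q1" and Q2: "admissible {a..a + dt} (2 * R) Lip Q2"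
    and d: "\<And>\<sigma>. \<sigma> \<in> {a..a + dt} \<Longrightarrow> H_bound s (\<lambda>k. Q1 \<sigma> k - Q2 \<sigma> k) d"
    and t: "t \<in> {a..a + dt}"
  shows "H_bound s (\<lambda>k. picard_map a f0 Q1 t k - picard_map a f0 Q2 t k) (d / 2)"
proof -
  have d0: "0 \<le> d" using d[of a] dt_pos H_bound_nonneg by auto
  have int: "(\<lambda>\<sigma>. reg_flux \<mu> (Q \<sigma>) (Q \<sigma>) k) integrable_on {a..t}"
    if "admissible {a..a + dt} (2 * R) Lip Q" for Q k
    by (rule admissible_integrable[OF that]) (use t in auto)
  have eq: "picard_map a f0 Q1 t k - picard_map a f0 Q2 t k
      = - integral {a..t} (\<lambda>\<sigma>. reg_flux \<mu> (Q1 \<sigma>) (Q1 \<sigma>) k - reg_flux \<mu> (Q2 \<sigma>) (Q2 \<sigma>) k)" for k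
    unfolding picard_map_def using integral_diff[OF int[OF Q1] int[OF Q2], of k] by simp
  have "H_bound s (\<lambda>k. integral {a..t} (\<lambda>\<sigma>. reg_flux \<mu> (Q1 \<sigma>) (Q1 \<sigma>) k - reg_flux \<mu> (Q2 \<sigma>) (Q2 \<sigma>) k))
      ((t - a) * (C * (2 * R + 2 * R) * d))"
  proof (rule H_bound_integral)
    show "a \<le> t" using t by simp
    show "(\<lambda>\<sigma>. reg_flux \<mu> (Q1 \<sigma>) (Q1 \<sigma>) k - reg_flux \<mu> (Q2 \<sigma>) (Q2 \<sigma>) k) integrable_on {a..t}" for k
      by (rule integrable_diff[OF int[OF Q1] int[OF Q2]])
    fix \<sigma> assume "\<sigma> \<in> {a..t}"
    hence \<sigma>: "\<sigma> \<in> {a..a + dt}" using t by auto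
    show "H_bound s (\<lambda>k. reg_flux \<mu> (Q1 \<sigma>) (Q1 \<sigma>) k - reg_flux \<mu> (Q2 \<sigma>) (Q2 \<sigma>) k) (C * (2 * R + 2 * R) * d)"
      by (rule reg_flux_lipschitz[OF admissibleD(2)[OF Q1 \<sigma>] admissibleD(2)[OF Q2 \<sigma>]
            admissibleD(3)[OF Q1 \<sigma>] admissibleD(3)[OF Q2 \<sigma>] d[OF \<sigma>]])
  qed
  moreover have "(t - a) * (C * (2 * R + 2 * R) * d) \<le> d / 2"
  proof -
    have "(t - a) * (C * (2 * R + 2 * R) * d) \<le> dt * (C * (2 * R + 2 * R) * d)"
      by (rule mult_right_mono) (use t C_pos R_pos d0 in auto)
    also have "\<dots> = d / 2" using C_pos R_pos by (simp add: dt_def field_simps)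
    finally show ?thesis .
  qed
  ultimately show ?thesis unfolding eq by (intro H_bound_uminus) (rule H_bound_mono)
qed

definition iter :: "nat \<Rightarrow> real \<Rightarrow> int \<times> int \<Rightarrow> complex" where
  "iter n = (picard_map a f0 ^^ n) (\<lambda>_. f0)"

lemma iter_Suc: "iter (Suc n) = picard_map a f0 (iter n)"
  by (simp add: iter_def)

lemma iter_admissible: "admissible {a..a + dt} (2 * R) Lip (iter n)"
proof (induction n)
  case 0
  have "H_bound s f0 (2 * R)" by (rule H_bound_mono[OF f0_bound]) (use R_pos in simp)
  moreover have "H_bound s (\<lambda>k. f0 k - f0 k) (\<bar>\<sigma> - \<tau>\<bar> * Lip)" for \<sigma> \<tau>
    by (rule H_bound_mono[OF H_bound_cong[OF H_bound_zero]]) (use Lip_nonneg in auto)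
  ultimately show ?case using f0_hermitian f0_zero by (simp add: iter_def admissible_def)
next
  case (Suc n) thus ?case unfolding iter_Suc by (rule picard_map_admissible)
qed

lemma iter_at_start: "iter n a = f0"
  by (cases n) (auto simp: iter_def picard_map_def)

lemma iter_step_H_bound:
  assumes "t \<in> {a..a + dt}"
  shows "H_bound s (\<lambda>k. iter (Suc n) t k - iter n t k) (R * (1/2) ^ n)"
  using assms
proof (induction n arbitrary: t)
  case 0
  have "iter 0 t = f0" by (simp add: iter_def)
  hence "H_bound s (\<lambda>k. iter (Suc 0) t k - iter 0 t k) (R / 2)"
    using picard_map_diff_initial[OF iter_admissible[of 0] 0] by (simp add: iter_Suc)
  thus ?case by (rule H_bound_mono) (use R_pos in simp)
next
  case (Suc n)
  have "H_bound s (\<lambda>k. picard_map a f0 (iter (Suc n)) t k - picard_map a f0 (iter n) t k) (R * (1/2) ^ n / 2)"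
    by (rule picard_map_contraction[OF iter_admissible iter_admissible Suc.IH Suc.prems])
  thus ?case by (simp add: iter_Suc[of "Suc n"] iter_Suc[of n, symmetric])
qed

lemma iter_Cauchy_H_bound:
  assumes "n \<le> m" "t \<in> {a..a + dt}"
  shows "H_bound s (\<lambda>k. iter m t k - iter n t k) (2 * R * (1/2) ^ n)"
proof -
  have "H_bound s (\<lambda>k. iter m t k - iter n t k) (2 * R * ((1/2) ^ n - (1/2) ^ m))"
    using assms(1)
  proof (induction m rule: dec_induct)
    case base show ?case by (auto intro: H_bound_cong[OF H_bound_zero])
  next
    case (step m)
    have "H_bound s (\<lambda>k. (iter (Suc m) t k - iter m t k) + (iter m t k - iter n t k))
        (R * (1/2) ^ m + 2 * R * ((1/2) ^ n - (1/2) ^ m))"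
      by (rule H_bound_add[OF iter_step_H_bound[OF assms(2)] step.IH])
    thus ?case by (rule H_bound_cong[OF H_bound_mono]) (auto simp: algebra_simps)
  qed
  thus ?thesis by (rule H_bound_mono) (use R_pos in simp)
qed

lemma iter_convergent:
  assumes t: "t \<in> {a..a + dt}"
  shows "convergent (\<lambda>n. iter n t k)"
proof -
  have "Cauchy (\<lambda>n. iter n t k)"
  proof (rule CauchyI)
    fix e :: real assume e: "0 < e"
    obtain M where M: "(1/2::real) ^ M < e / (2 * R)"
      using real_arch_pow_inv[of "e / (2 * R)" "1/2"] e R_pos by auto
    have close: "cmod (iter m t k - iter n t k) < e" if "M \<le> n" "n \<le> m" for m n
    proof -
      have "(\<lambda>k. iter m t k - iter n t k) (0, 0) = 0"
        using admissibleD(2)[OF iter_admissible t] by simp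
      hence "cmod (iter m t k - iter n t k) \<le> 2 * R * (1/2) ^ n"
        using H_bound_coeff[OF iter_Cauchy_H_bound[OF that(2) t] s_nonneg] by blast
      also have "\<dots> \<le> 2 * R * (1/2) ^ M" using that R_pos by (simp add: power_decreasing)
      also have "\<dots> < e" using M R_pos by (simp add: field_simps)
      finally show ?thesis .
    qed
    show "\<exists>M. \<forall>m\<ge>M. \<forall>n\<ge>M. cmod (iter m t k - iter n t k) < e"
      by (metis close nle_le norm_minus_commute)
  qed
  thus ?thesis by (simp add: Cauchy_convergent_iff)
qed

definition sol :: "real \<Rightarrow> int \<times> int \<Rightarrow> complex" where
  "sol t k = lim (\<lambda>n. iter n t k)"

lemma iter_tendsto_sol: "t \<in> {a..a + dt} \<Longrightarrow> (\<lambda>n. iter n t k) \<longlonglongrightarrow> sol t k"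
  using iter_convergent unfolding sol_def convergent_LIMSEQ_iff by blast

lemma sol_at_start: "sol a = f0"
proof
  fix k
  have "(\<lambda>n. iter n a k) \<longlonglongrightarrow> sol a k" using iter_tendsto_sol dt_pos by simp
  thus "sol a k = f0 k" by (simp add: iter_at_start LIMSEQ_const_iff)
qed

lemma sol_admissible: "admissible {a..a + dt} (2 * R) Lip sol"
  unfolding admissible_def
proof (intro conjI ballI)
  fix t assume t: "t \<in> {a..a + dt}"
  note lim = iter_tendsto_sol[OF t] and adm = admissibleD[OF iter_admissible t]
  have "(\<lambda>n. iter n t (- k)) \<longlonglongrightarrow> cnj (sol t k)" for k
    using tendsto_cnj[OF lim[of k]] hermitianD[OF adm(1)] by simp
  thus "hermitian (sol t)" unfolding hermitian_def using lim LIMSEQ_unique by blast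
  show "sol t (0, 0) = 0" using lim[of "(0, 0)"] adm(2) by (simp add: LIMSEQ_const_iff)
  show "H_bound s (sol t) (2 * R)" by (rule H_bound_limit[OF lim]) (simp add: adm(3))
  fix \<tau> assume \<tau>: "\<tau> \<in> {a..a + dt}"
  show "H_bound s (\<lambda>k. sol t k - sol \<tau> k) (\<bar>t - \<tau>\<bar> * Lip)"
    by (rule H_bound_limit[where x="\<lambda>n k. iter n t k - iter n \<tau> k"])
       (use lim iter_tendsto_sol[OF \<tau>] adm(4)[OF \<tau>] in \<open>auto intro: tendsto_diff\<close>)
qed

lemma iter_sol_H_bound:
  assumes t: "t \<in> {a..a + dt}"
  shows "H_bound s (\<lambda>k. iter n t k - sol t k) (2 * R * (1/2) ^ n)"
proof -
  have "H_bound s (\<lambda>k. sol t k - iter n t k) (2 * R * (1/2) ^ n)"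
  proof (rule H_bound_limit[where x="\<lambda>m k. iter m t k - iter n t k"])
    show "(\<lambda>m. iter m t k - iter n t k) \<longlonglongrightarrow> sol t k - iter n t k" for k
      by (intro tendsto_diff iter_tendsto_sol[OF t] tendsto_const)
    show "\<forall>\<^sub>F m in sequentially. H_bound s (\<lambda>k. iter m t k - iter n t k) (2 * R * (1/2) ^ n)"
      using eventually_ge_at_top[of n] by eventually_elim (rule iter_Cauchy_H_bound[OF _ t])
  qed
  thus ?thesis by (rule H_bound_diff_commute)
qed

text \<open>Passing to the limit in \<open>iter (Suc n) = picard_map a f0 (iter n)\<close>: the integrands
  converge uniformly by \<open>reg_flux_lipschitz\<close>.\<close>
lemma sol_fixed_point:
  assumes t: "t \<in> {a..a + dt}"
  shows "sol t k = picard_map a f0 sol t k"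
proof -
  define D where "D n \<sigma> = reg_flux \<mu> (iter n \<sigma>) (iter n \<sigma>) k - reg_flux \<mu> (sol \<sigma>) (sol \<sigma>) k" for n \<sigma>
  define c where "c n = C * (2 * R + 2 * R) * (2 * R * (1/2) ^ n)" for n
  have int: "(\<lambda>\<sigma>. reg_flux \<mu> (Q \<sigma>) (Q \<sigma>) k) integrable_on {a..t}"
    if "admissible {a..a + dt} (2 * R) Lip Q" for Q
    by (rule admissible_integrable[OF that]) (use t in auto)
  have D_bound: "cmod (integral {a..t} (D n)) \<le> c n * (t - a)" for n
  proof (rule integral_bound)
    have "continuous_on {a..a + dt} (D n)"
      unfolding D_def
      by (intro continuous_on_diff admissible_continuous[OF iter_admissible]
          admissible_continuous[OF sol_admissible])
    thus "continuous_on {a..t} (D n)" by (rule continuous_on_subset) (use t in auto)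
    fix \<sigma> assume "\<sigma> \<in> {a..t}"
    hence \<sigma>: "\<sigma> \<in> {a..a + dt}" using t by auto
    show "cmod (D n \<sigma>) \<le> c n"
      unfolding D_def c_def
      by (rule H_bound_coeff[OF reg_flux_lipschitz s_nonneg])
         (use admissibleD[OF iter_admissible \<sigma>] admissibleD[OF sol_admissible \<sigma>] iter_sol_H_bound[OF \<sigma>]
           in simp_all)
  qed (use t in simp)
  have c_lim: "(\<lambda>n. c n * (t - a)) \<longlonglongrightarrow> 0"
    unfolding c_def by (intro tendsto_mult_left_zero tendsto_mult_right_zero LIMSEQ_power_zero) simp
  have "(\<lambda>n. integral {a..t} (D n)) \<longlonglongrightarrow> 0"
    by (rule Lim_null_comparison[OF always_eventually c_lim]) (use D_bound in auto)
  hence "(\<lambda>n. picard_map a f0 sol t k - integral {a..t} (D n)) \<longlonglongrightarrow> picard_map a f0 sol t k - 0"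
    by (intro tendsto_diff tendsto_const)
  moreover have "picard_map a f0 (iter n) t k = picard_map a f0 sol t k - integral {a..t} (D n)" for n
    unfolding picard_map_def D_def using integral_diff[OF int[OF iter_admissible] int[OF sol_admissible]]
    by simp
  ultimately have "(\<lambda>n. picard_map a f0 (iter n) t k) \<longlonglongrightarrow> picard_map a f0 sol t k" by simp
  moreover have "(\<lambda>n. picard_map a f0 (iter n) t k) \<longlonglongrightarrow> sol t k"
    using LIMSEQ_Suc[OF iter_tendsto_sol[OF t]] by (simp add: iter_Suc)
  ultimately show ?thesis using LIMSEQ_unique by blast
qed

end

context rqg_bilinear
begin

lemma local_existence:
  assumes "0 < R" "hermitian f0" "f0 (0, 0) = 0" "H_bound s f0 R"
  obtains \<psi> where "\<psi> a = f0" "admissible {a..a + 1 / (8 * C * R)} (2 * R) (4 * C * R\<^sup>2) \<psi>"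
    "\<And>t k. t \<in> {a..a + 1 / (8 * C * R)} \<Longrightarrow> \<psi> t k = picard_map a f0 \<psi> t k"
proof -
  interpret picard \<mu> s C a R f0 by unfold_locales (use assms in auto)
  show ?thesis using that sol_at_start sol_admissible sol_fixed_point unfolding dt_def Lip_def by blast
qed

end

section \<open>The a priori bound\<close>

lemma first_zero_crossing:
  fixes W :: "real \<Rightarrow> real"
  assumes Wc: "continuous_on {a..b} W" and Wa: "W a < 0" and Wb: "0 < W b" and ab: "a \<le> b"
  obtains t0 where "a < t0" "t0 \<le> b" "W t0 = 0" "\<And>\<sigma>. a \<le> \<sigma> \<Longrightarrow> \<sigma> < t0 \<Longrightarrow> W \<sigma> < 0"
proof -
  define S where "S = {t \<in> {a..b}. W t = 0}"
  have "S \<noteq> {}"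
    using IVT'[of W a 0 b] Wa Wb ab Wc unfolding S_def by force
  moreover have S_bdd: "bdd_below S" unfolding S_def by (rule bdd_belowI[of _ a]) auto
  moreover have "closed S" unfolding S_def by (rule continuous_closed_preimage_constant[OF Wc]) simp
  ultimately have "Inf S \<in> S" by (rule closed_contains_Inf)
  hence t0: "a \<le> Inf S" "Inf S \<le> b" "W (Inf S) = 0" by (auto simp: S_def)
  show ?thesis
  proof (rule that[OF _ t0(2,3)])
    show "a < Inf S" using t0 Wa by (cases "a = Inf S") auto
    fix \<sigma> assume \<sigma>: "a \<le> \<sigma>" "\<sigma> < Inf S"
    show "W \<sigma> < 0"
    proof (rule ccontr)
      assume "\<not> W \<sigma> < 0"
      then obtain x where x: "a \<le> x" "x \<le> \<sigma>" "W x = 0"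
        using IVT'[of W a 0 \<sigma>] Wa \<sigma> t0(2) continuous_on_subset[OF Wc, of "{a..\<sigma>}"] by force
      hence "x \<in> S" using \<sigma> t0(2) by (auto simp: S_def)
      hence "Inf S \<le> x" by (rule cInf_lower[OF _ S_bdd])
      thus False using x \<sigma> by simp
    qed
  qed
qed

text \<open>Comparison with a strict supersolution \<open>Y' > \<Phi>(Y)\<close> of the growth law of \<open>X\<close>,
  where \<open>X\<close> is only known to satisfy the integrated inequality
  \<open>X t \<le> X \<tau> + (t - \<tau>) \<Phi>(max X)\<close>: at a first crossing the difference quotients of \<open>Y\<close>
  from the left would stay below \<open>\<Phi>(Y)\<close>.\<close>
lemma supersolution_comparison:
  fixes X Y Y' \<Phi> :: "real \<Rightarrow> real"
  assumes Xc: "continuous_on {a..b} X"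
    and growth: "\<And>\<tau> t c. a \<le> \<tau> \<Longrightarrow> \<tau> \<le> t \<Longrightarrow> t \<le> b \<Longrightarrow> (\<forall>\<sigma>\<in>{\<tau>..t}. X \<sigma> \<le> c) \<Longrightarrow>
        X t \<le> X \<tau> + (t - \<tau>) * \<Phi> c"
    and Yd: "\<And>t. (Y has_real_derivative Y' t) (at t)"
    and Y_super: "\<And>t. t \<in> {a..b} \<Longrightarrow> \<Phi> (Y t) < Y' t"
    and Y_mono: "\<And>x y. a \<le> x \<Longrightarrow> x \<le> y \<Longrightarrow> Y x \<le> Y y"
    and start: "X a < Y a"
    and t: "t \<in> {a..b}"
  shows "X t \<le> Y t"
proof (rule ccontr)
  assume "\<not> X t \<le> Y t"
  have "continuous_on {a..t} (\<lambda>u. X u - Y u)"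
    using t by (intro continuous_on_diff continuous_on_subset[OF Xc] DERIV_continuous_on[OF DERIV_subset[OF Yd]])
      auto
  then obtain t0 where t0: "a < t0" "t0 \<le> t" "X t0 = Y t0"
    and below: "\<And>\<sigma>. a \<le> \<sigma> \<Longrightarrow> \<sigma> < t0 \<Longrightarrow> X \<sigma> < Y \<sigma>"
    by (rule first_zero_crossing) (use start \<open>\<not> X t \<le> Y t\<close> t in auto)
  have quotient: "(Y t0 - Y \<tau>) / (t0 - \<tau>) < \<Phi> (Y t0)" if \<tau>: "a \<le> \<tau>" "\<tau> < t0" for \<tau>
  proof -
    have "\<forall>\<sigma>\<in>{\<tau>..t0}. X \<sigma> \<le> Y t0"
      using t0(3) below Y_mono \<tau> by (metis atLeastAtMost_iff order.order_iff_strict order.strict_trans2 order_trans)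
    hence "X t0 \<le> X \<tau> + (t0 - \<tau>) * \<Phi> (Y t0)"
      by (intro growth) (use \<tau> t0 t in auto)
    hence "Y t0 - Y \<tau> < (t0 - \<tau>) * \<Phi> (Y t0)" using below[OF \<tau>] t0(3) by linarith
    thus ?thesis using \<tau> by (simp add: divide_simps mult.commute)
  qed
  have "((\<lambda>y. (Y y - Y t0) / (y - t0)) \<longlongrightarrow> Y' t0) (at t0)"
    using Yd[of t0] by (simp add: has_field_derivative_iff)
  moreover have "\<Phi> (Y t0) < Y' t0" using Y_super t0 t by auto
  ultimately have "\<forall>\<^sub>F y in at t0. \<Phi> (Y t0) < (Y y - Y t0) / (y - t0)" by (rule order_tendstoD)
  then obtain d where d: "0 < d" "\<And>y. y \<noteq> t0 \<and> dist y t0 < d \<Longrightarrow> \<Phi> (Y t0) < (Y y - Y t0) / (y - t0)"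
    unfolding eventually_at by auto
  define \<tau> where "\<tau> = max a (t0 - d / 2)"
  have \<tau>: "a \<le> \<tau>" "\<tau> < t0" "dist \<tau> t0 < d" using t0(1) d(1) by (auto simp: \<tau>_def dist_real_def)
  have "\<Phi> (Y t0) < (Y \<tau> - Y t0) / (\<tau> - t0)" using d(2)[of \<tau>] \<tau> by auto
  also have "(Y \<tau> - Y t0) / (\<tau> - t0) = (Y t0 - Y \<tau>) / (t0 - \<tau>)" by (simp add: divide_simps) (simp add: algebra_simps)
  finally show False using quotient[OF \<tau>(1,2)] by simp
qed

text \<open>The explicit supersolution of \<open>y' = A y (c\<^sub>0 + c\<^sub>1 ln (1 + y))\<close>: with \<open>z = ln (1 + y)\<close>
  and \<open>\<kappa> = c\<^sub>0 / c\<^sub>1\<close>, the doubled rate \<open>z' = 2 A (c\<^sub>0 + c\<^sub>1 z)\<close> is solved by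
  \<open>z + \<kappa> = (z\<^sub>0 + \<kappa>) e\<^bsup>2 A c\<^sub>1 (u - a)\<^esup>\<close>.\<close>
lemma double_exponential_supersolution:
  fixes A c0 c1 z0 a :: real
  assumes A: "0 < A" and c0: "0 < c0" and c1: "0 < c1" and z0: "0 < z0"
  defines "Y \<equiv> \<lambda>u. exp ((z0 + c0 / c1) * exp (2 * A * c1 * (u - a)) - c0 / c1) - 1"
  obtains Y' where "\<And>u. (Y has_real_derivative Y' u) (at u)"
    "\<And>u. a \<le> u \<Longrightarrow> A * Y u * (c0 + c1 * ln (1 + Y u)) < Y' u"
    "\<And>x y. a \<le> x \<Longrightarrow> x \<le> y \<Longrightarrow> Y x \<le> Y y"
    "Y a = exp z0 - 1"
proof
  define \<kappa> where "\<kappa> = c0 / c1"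
  have \<kappa>: "0 < \<kappa>" using c0 c1 by (simp add: \<kappa>_def)
  define Z where "Z u = (z0 + \<kappa>) * exp (2 * A * c1 * (u - a)) - \<kappa>" for u
  have Y_eq: "Y u = exp (Z u) - 1" for u by (simp add: Y_def Z_def \<kappa>_def)
  define Y' where "Y' u = exp (Z u) * ((z0 + \<kappa>) * (exp (2 * A * c1 * (u - a)) * (2 * A * c1)))" for u
  show "(Y has_real_derivative Y' u) (at u)" for u
    unfolding Y_def Y'_def Z_def \<kappa>_def[symmetric] by (auto intro!: derivative_eq_intros)
  have Z_mono: "Z x \<le> Z y" if "x \<le> y" for x y
    using that A c1 z0 \<kappa> by (simp add: Z_def mult_left_mono)
  show "Y x \<le> Y y" if "a \<le> x" "x \<le> y" for x y
    using Z_mono[OF that(2)] by (simp add: Y_eq)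
  show "Y a = exp z0 - 1" by (simp add: Y_eq Z_def)
  fix u assume u: "a \<le> u"
  have z: "0 < Z u" using Z_mono[OF u] z0 by (simp add: Z_def)
  have "A * Y u * (c0 + c1 * ln (1 + Y u)) = A * (exp (Z u) - 1) * (c0 + c1 * Z u)" by (simp add: Y_eq)
  also have "\<dots> < 2 * A * exp (Z u) * (c0 + c1 * Z u)"
    using A c0 c1 z by (intro mult_strict_right_mono) (auto simp: algebra_simps add_pos_pos)
  also have "\<dots> = Y' u" using c1 by (simp add: Y'_def Z_def \<kappa>_def field_simps)
  finally show "A * Y u * (c0 + c1 * ln (1 + Y u)) < Y' u" .
qed

definition rqg_mild_on :: "real \<Rightarrow> real \<Rightarrow> real \<Rightarrow> (real \<Rightarrow> int \<times> int \<Rightarrow> complex) \<Rightarrow> bool" where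
  "rqg_mild_on \<mu> a b \<phi> \<longleftrightarrow> (\<forall>\<tau> t k. a \<le> \<tau> \<longrightarrow> \<tau> \<le> t \<longrightarrow> t \<le> b \<longrightarrow>
     (\<lambda>\<sigma>. reg_flux \<mu> (\<phi> \<sigma>) (\<phi> \<sigma>) k) integrable_on {\<tau>..t} \<and>
     \<phi> t k - \<phi> \<tau> k = - integral {\<tau>..t} (\<lambda>\<sigma>. reg_flux \<mu> (\<phi> \<sigma>) (\<phi> \<sigma>) k))"

lemma reg_flux_H_bound_log:
  assumes "0 < \<mu>" "1 < s"
  obtains c0 c1 where "0 < c0" "0 < c1"
    "\<And>f M b. f (0, 0) = 0 \<Longrightarrow> H_bound 1 f M \<Longrightarrow> H_bound s f b \<Longrightarrow>
       H_bound s (reg_flux \<mu> f f) (4 * 2 powr s / \<mu> * (1 + M) * b * (c0 + c1 * ln (1 + b)))"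
proof -
  obtain c0 c1 where c: "0 < c0" "0 < c1"
    "\<And>f M b. f (0, 0) = 0 \<Longrightarrow> H_bound 1 f M \<Longrightarrow> H_bound s f b \<Longrightarrow>
       l1_bound f ((1 + M) * (c0 + c1 * ln (1 + b)))"
    using l1_bound_log[OF assms(2)] by blast
  show ?thesis
  proof (rule that[OF c(1,2)])
    fix f M b assume f: "f (0, 0) = 0" "H_bound 1 f M" "H_bound s f b"
    have "H_bound s (reg_flux \<mu> f f) ((2 * 2 powr s / \<mu>) *
        ((1 + M) * (c0 + c1 * ln (1 + b)) * b + (1 + M) * (c0 + c1 * ln (1 + b)) * b))"
      using assms(2) by (intro reg_flux_H_bound[OF assms(1)] f(1,3) f(3) c(3)[OF f]) simp
    thus "H_bound s (reg_flux \<mu> f f) (4 * 2 powr s / \<mu> * (1 + M) * b * (c0 + c1 * ln (1 + b)))"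
      by (rule H_bound_mono) (simp add: field_simps)
  qed
qed

lemma Hnorm_increment_le:
  assumes mild: "rqg_mild_on \<mu> a b \<phi>" and \<tau>t: "a \<le> \<tau>" "\<tau> \<le> t" "t \<le> b"
    and bounded: "\<And>\<sigma>. \<sigma> \<in> {a..b} \<Longrightarrow> H_bound s (\<phi> \<sigma>) B"
    and flux: "\<And>\<sigma>. \<sigma> \<in> {\<tau>..t} \<Longrightarrow> H_bound s (reg_flux \<mu> (\<phi> \<sigma>) (\<phi> \<sigma>)) F"
  shows "\<bar>Hnorm s (\<phi> t) - Hnorm s (\<phi> \<tau>)\<bar> \<le> (t - \<tau>) * F"
proof -
  have "H_bound s (\<lambda>k. integral {\<tau>..t} (\<lambda>\<sigma>. reg_flux \<mu> (\<phi> \<sigma>) (\<phi> \<sigma>) k)) ((t - \<tau>) * F)"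
    using mild \<tau>t unfolding rqg_mild_on_def by (intro H_bound_integral flux) auto
  hence d: "H_bound s (\<lambda>k. \<phi> t k - \<phi> \<tau> k) ((t - \<tau>) * F)"
    using mild \<tau>t unfolding rqg_mild_on_def by (auto elim: H_bound_cong)
  have norm: "H_bound s (\<phi> \<sigma>) (Hnorm s (\<phi> \<sigma>))" if "\<sigma> \<in> {a..b}" for \<sigma>
    by (rule H_bound_Hnorm[OF H_bound_summable(1)[OF bounded[OF that]]])
  have "H_bound s (\<lambda>k. \<phi> \<tau> k + (\<phi> t k - \<phi> \<tau> k)) (Hnorm s (\<phi> \<tau>) + (t - \<tau>) * F)"
    by (rule H_bound_add[OF norm d]) (use \<tau>t in auto)
  hence "Hnorm s (\<phi> t) \<le> Hnorm s (\<phi> \<tau>) + (t - \<tau>) * F"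
    by (intro H_bound_summable(2)) (simp add: H_bound_cong)
  moreover have "H_bound s (\<lambda>k. \<phi> t k - (\<phi> t k - \<phi> \<tau> k)) (Hnorm s (\<phi> t) + (t - \<tau>) * F)"
    by (rule H_bound_diff[OF norm d]) (use \<tau>t in auto)
  hence "Hnorm s (\<phi> \<tau>) \<le> Hnorm s (\<phi> t) + (t - \<tau>) * F"
    by (intro H_bound_summable(2)) (simp add: H_bound_cong)
  ultimately show ?thesis by linarith
qed

lemma Hnorm_growth:
  assumes mild: "rqg_mild_on \<mu> a b \<phi>" and bounded: "\<And>\<sigma>. \<sigma> \<in> {a..b} \<Longrightarrow> H_bound s (\<phi> \<sigma>) B"
    and flux: "\<And>\<sigma> c. \<sigma> \<in> {a..b} \<Longrightarrow> H_bound s (\<phi> \<sigma>) c \<Longrightarrow> H_bound s (reg_flux \<mu> (\<phi> \<sigma>) (\<phi> \<sigma>)) (\<Phi> c)"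
  shows "continuous_on {a..b} (\<lambda>t. Hnorm s (\<phi> t))"
    and "\<And>\<tau> t c. a \<le> \<tau> \<Longrightarrow> \<tau> \<le> t \<Longrightarrow> t \<le> b \<Longrightarrow> \<forall>\<sigma>\<in>{\<tau>..t}. Hnorm s (\<phi> \<sigma>) \<le> c \<Longrightarrow>
      Hnorm s (\<phi> t) \<le> Hnorm s (\<phi> \<tau>) + (t - \<tau>) * \<Phi> c"
proof -
  have increment: "\<bar>Hnorm s (\<phi> t) - Hnorm s (\<phi> \<tau>)\<bar> \<le> (t - \<tau>) * \<Phi> c"
    if "a \<le> \<tau>" "\<tau> \<le> t" "t \<le> b" "\<And>\<sigma>. \<sigma> \<in> {\<tau>..t} \<Longrightarrow> H_bound s (\<phi> \<sigma>) c" for \<tau> t c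
    by (rule Hnorm_increment_le[OF mild that(1-3) bounded]) (use that in \<open>auto intro: flux\<close>)
  have "\<bar>Hnorm s (\<phi> u) - Hnorm s (\<phi> v)\<bar> \<le> max (\<Phi> B) 0 * \<bar>u - v\<bar>" if "u \<in> {a..b}" "v \<in> {a..b}" for u v
  proof -
    have "\<bar>Hnorm s (\<phi> u) - Hnorm s (\<phi> v)\<bar> \<le> \<bar>u - v\<bar> * \<Phi> B"
      using increment[of v u B] increment[of u v B] bounded that
      by (cases "v \<le> u") (auto simp: abs_minus_commute)
    also have "\<dots> \<le> max (\<Phi> B) 0 * \<bar>u - v\<bar>"
      using mult_right_mono[of "\<Phi> B" "max (\<Phi> B) 0" "\<bar>u - v\<bar>"] by (simp add: mult.commute)
    finally show ?thesis .
  qed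
  thus "continuous_on {a..b} (\<lambda>t. Hnorm s (\<phi> t))"
    by (intro lipschitz_on_continuous_on[of "max (\<Phi> B) 0"]) (simp add: lipschitz_on_def dist_real_def)
  fix \<tau> t c assume \<tau>t: "a \<le> \<tau>" "\<tau> \<le> t" "t \<le> b" and le: "\<forall>\<sigma>\<in>{\<tau>..t}. Hnorm s (\<phi> \<sigma>) \<le> c"
  have "H_bound s (\<phi> \<sigma>) c" if "\<sigma> \<in> {\<tau>..t}" for \<sigma>
  proof (rule H_bound_mono[OF H_bound_Hnorm[OF H_bound_summable(1)[OF bounded]]])
    show "\<sigma> \<in> {a..b}" using that \<tau>t by auto
    show "Hnorm s (\<phi> \<sigma>) \<le> c" using le that by blast
  qed
  thus "Hnorm s (\<phi> t) \<le> Hnorm s (\<phi> \<tau>) + (t - \<tau>) * \<Phi> c"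
    using increment[OF \<tau>t] by (smt (verit))
qed

text \<open>Along a solution with \<open>\<parallel>\<theta>\<parallel>\<^sub>1 \<le> M\<close> the growth of \<open>x = \<parallel>\<theta>\<parallel>\<^sub>s\<close> obeys
  \<open>x' \<le> A x (c\<^sub>0 + c\<^sub>1 ln (1 + x))\<close>, whose solutions grow at most double exponentially.\<close>
lemma Hnorm_a_priori:
  assumes mu: "0 < \<mu>" and s1: "1 < s" and M0: "0 \<le> M" and x0: "0 \<le> x0"
  obtains K where "\<And>a b \<phi> B t. b - a \<le> H \<Longrightarrow> rqg_mild_on \<mu> a b \<phi> \<Longrightarrow>
     (\<And>t. t \<in> {a..b} \<Longrightarrow> \<phi> t (0, 0) = 0 \<and> H_bound 1 (\<phi> t) M \<and> H_bound s (\<phi> t) B) \<Longrightarrow>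
     Hnorm s (\<phi> a) \<le> x0 \<Longrightarrow> t \<in> {a..b} \<Longrightarrow> Hnorm s (\<phi> t) \<le> K"
proof -
  obtain c0 c1 where c: "0 < c0" "0 < c1"
    "\<And>f M b. f (0, 0) = 0 \<Longrightarrow> H_bound 1 f M \<Longrightarrow> H_bound s f b \<Longrightarrow>
       H_bound s (reg_flux \<mu> f f) (4 * 2 powr s / \<mu> * (1 + M) * b * (c0 + c1 * ln (1 + b)))"
    using reg_flux_H_bound_log[OF mu s1] by blast
  define A where "A = 4 * 2 powr s / \<mu> * (1 + M)"
  have A: "0 < A" using mu M0 by (simp add: A_def)
  define z0 where "z0 = ln (2 + x0)"
  have z0: "0 < z0" using x0 by (simp add: z0_def)
  define Y where "Y a u = exp ((z0 + c0 / c1) * exp (2 * A * c1 * (u - a)) - c0 / c1) - 1" for a u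
  show ?thesis
  proof (rule that[of "Y 0 H"])
    fix a b \<phi> B t
    assume bH: "b - a \<le> H" and mild: "rqg_mild_on \<mu> a b \<phi>"
      and P: "\<And>t. t \<in> {a..b} \<Longrightarrow> \<phi> t (0, 0) = 0 \<and> H_bound 1 (\<phi> t) M \<and> H_bound s (\<phi> t) B"
      and start: "Hnorm s (\<phi> a) \<le> x0" and t: "t \<in> {a..b}"
    note growth = Hnorm_growth[OF mild, where B=B and \<Phi>="\<lambda>c. A * c * (c0 + c1 * ln (1 + c))"]
    have flux: "H_bound s (reg_flux \<mu> (\<phi> \<sigma>) (\<phi> \<sigma>)) (A * c * (c0 + c1 * ln (1 + c)))"
      if "\<sigma> \<in> {a..b}" "H_bound s (\<phi> \<sigma>) c" for \<sigma> c
      unfolding A_def using P[OF that(1)] that(2) by (intro c(3)) auto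
    obtain Y' where Y: "\<And>u. (Y a has_real_derivative Y' u) (at u)"
      "\<And>u. a \<le> u \<Longrightarrow> A * Y a u * (c0 + c1 * ln (1 + Y a u)) < Y' u"
      "\<And>x y. a \<le> x \<Longrightarrow> x \<le> y \<Longrightarrow> Y a x \<le> Y a y" "Y a a = exp z0 - 1"
      using double_exponential_supersolution[OF A c(1,2) z0, of a] unfolding Y_def by blast
    have "exp z0 = 2 + x0" using x0 by (simp add: z0_def)
    hence "Hnorm s (\<phi> a) < Y a a" using start Y(4) by linarith
    hence "Hnorm s (\<phi> t) \<le> Y a t"
      using supersolution_comparison[OF growth(1) growth(2) Y(1) _ Y(3) _ t] P flux Y(2) by force
    also have "\<dots> \<le> Y a (a + H)" using Y(3)[of t "a + H"] t bH by auto
    also have "\<dots> = Y 0 H" by (simp add: Y_def)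
    finally show "Hnorm s (\<phi> t) \<le> Y 0 H" .
  qed
qed

section \<open>Continuation\<close>

lemma rQG_solution_half_iff:
  "rQG_solution (1/2) \<mu> s \<theta>0 T \<phi> \<longleftrightarrow>
     (\<exists>B. \<forall>t\<in>{0..T}. in_H s (\<phi> t) \<and> Hnorm s (\<phi> t) \<le> B) \<and>
     (\<forall>t\<in>{0..T}. \<forall>k. (\<lambda>\<tau>. reg_flux \<mu> (\<phi> \<tau>) (\<phi> \<tau>) k) integrable_on {0..t} \<and>
        \<phi> t k = \<theta>0 k - integral {0..t} (\<lambda>\<tau>. reg_flux \<mu> (\<phi> \<tau>) (\<phi> \<tau>) k))"
  unfolding rQG_solution_def rQG_integrand_eq_reg_flux ..

lemma rQG_solution_mono: "rQG_solution \<alpha> \<mu> s \<theta>0 T \<phi> \<Longrightarrow> T' \<le> T \<Longrightarrow> rQG_solution \<alpha> \<mu> s \<theta>0 T' \<phi>"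
  unfolding rQG_solution_def by (meson atLeastAtMost_iff order_trans)

lemma rQG_solution_mild_on:
  assumes sol: "rQG_solution (1/2) \<mu> s \<theta>0 T \<phi>" and ab: "0 \<le> a" "b \<le> T"
  shows "rqg_mild_on \<mu> a b \<phi>"
  unfolding rqg_mild_on_def
proof (intro allI impI conjI)
  fix \<tau> t k assume \<tau>t: "a \<le> \<tau>" "\<tau> \<le> t" "t \<le> b"
  have eq: "\<forall>t\<in>{0..T}. (\<lambda>\<sigma>. reg_flux \<mu> (\<phi> \<sigma>) (\<phi> \<sigma>) k) integrable_on {0..t} \<and>
      \<phi> t k = \<theta>0 k - integral {0..t} (\<lambda>\<sigma>. reg_flux \<mu> (\<phi> \<sigma>) (\<phi> \<sigma>) k)"
    using sol unfolding rQG_solution_half_iff by blast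
  have int: "(\<lambda>\<sigma>. reg_flux \<mu> (\<phi> \<sigma>) (\<phi> \<sigma>) k) integrable_on {0..t}" using eq \<tau>t ab by auto
  show "(\<lambda>\<sigma>. reg_flux \<mu> (\<phi> \<sigma>) (\<phi> \<sigma>) k) integrable_on {\<tau>..t}"
    by (rule integrable_subinterval_real[OF int]) (use \<tau>t ab in auto)
  have split: "integral {0..\<tau>} (\<lambda>\<sigma>. reg_flux \<mu> (\<phi> \<sigma>) (\<phi> \<sigma>) k) + integral {\<tau>..t} (\<lambda>\<sigma>. reg_flux \<mu> (\<phi> \<sigma>) (\<phi> \<sigma>) k)
      = integral {0..t} (\<lambda>\<sigma>. reg_flux \<mu> (\<phi> \<sigma>) (\<phi> \<sigma>) k)"
    by (rule Henstock_Kurzweil_Integration.integral_combine[OF _ \<tau>t(2) int]) (use \<tau>t ab in auto)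
  have "\<phi> t k = \<theta>0 k - integral {0..t} (\<lambda>\<sigma>. reg_flux \<mu> (\<phi> \<sigma>) (\<phi> \<sigma>) k)"
    and "\<phi> \<tau> k = \<theta>0 k - integral {0..\<tau>} (\<lambda>\<sigma>. reg_flux \<mu> (\<phi> \<sigma>) (\<phi> \<sigma>) k)"
    using eq \<tau>t ab by auto
  thus "\<phi> t k - \<phi> \<tau> k = - integral {\<tau>..t} (\<lambda>\<sigma>. reg_flux \<mu> (\<phi> \<sigma>) (\<phi> \<sigma>) k)"
    unfolding split[symmetric] by simp
qed

lemma rQG_solution_a_priori:
  assumes "0 < \<mu>" "1 < s" "0 \<le> M" "0 \<le> x0"
  obtains K where "\<And>\<theta>0 T \<phi> a. rQG_solution (1/2) \<mu> s \<theta>0 T \<phi> \<Longrightarrow> 0 \<le> a \<Longrightarrow> a \<le> T \<Longrightarrow> T - a \<le> H \<Longrightarrow>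
    (\<forall>t\<in>{a..T}. Hnorm 1 (\<phi> t) \<le> M) \<Longrightarrow> Hnorm s (\<phi> a) \<le> x0 \<Longrightarrow> Hnorm s (\<phi> T) \<le> K"
proof -
  obtain K where K: "\<And>a b \<phi> B t. b - a \<le> H \<Longrightarrow> rqg_mild_on \<mu> a b \<phi> \<Longrightarrow>
     (\<And>t. t \<in> {a..b} \<Longrightarrow> \<phi> t (0, 0) = 0 \<and> H_bound 1 (\<phi> t) M \<and> H_bound s (\<phi> t) B) \<Longrightarrow>
     Hnorm s (\<phi> a) \<le> x0 \<Longrightarrow> t \<in> {a..b} \<Longrightarrow> Hnorm s (\<phi> t) \<le> K"
    using Hnorm_a_priori[OF assms] by blast
  show ?thesis
  proof (rule that)
    fix \<theta>0 T \<phi> a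
    assume sol: "rQG_solution (1/2) \<mu> s \<theta>0 T \<phi>" and a: "0 \<le> a" "a \<le> T" "T - a \<le> H"
      and M: "\<forall>t\<in>{a..T}. Hnorm 1 (\<phi> t) \<le> M" and x0: "Hnorm s (\<phi> a) \<le> x0"
    obtain B where B: "\<forall>t\<in>{0..T}. in_H s (\<phi> t) \<and> Hnorm s (\<phi> t) \<le> B"
      using sol unfolding rQG_solution_def by blast
    have "\<phi> t (0, 0) = 0 \<and> H_bound 1 (\<phi> t) M \<and> H_bound s (\<phi> t) B" if "t \<in> {a..T}" for t
    proof -
      have "in_H s (\<phi> t)" "Hnorm s (\<phi> t) \<le> B" using B that a by auto
      thus ?thesis
        using in_H_H_bound_lower[of s "\<phi> t" 1] in_H_H_bound[of s "\<phi> t"] M that assms(2)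
        by (auto simp: in_H_def intro: H_bound_mono)
    qed
    thus "Hnorm s (\<phi> T) \<le> K"
      using K[OF a(3) rQG_solution_mild_on[OF sol a(1) order_refl] _ x0] a(2) by auto
  qed
qed

context rqg_bilinear
begin

lemma integral_piecewise:
  fixes f g h :: "real \<Rightarrow> 'a::banach"
  assumes abc: "a \<le> b" "b \<le> c" and f: "f integrable_on {a..b}" and g: "g integrable_on {b..c}"
    and hf: "\<And>x. x \<in> {a..b} \<Longrightarrow> h x = f x" and hg: "\<And>x. x \<in> {b..c} \<Longrightarrow> h x = g x"
  shows "h integrable_on {a..c} \<and> integral {a..c} h = integral {a..b} f + integral {b..c} g"
proof -
  have "h integrable_on {a..b}" "h integrable_on {b..c}"
    using Henstock_Kurzweil_Integration.integrable_cong[of "{a..b}" h f]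
      Henstock_Kurzweil_Integration.integrable_cong[of "{b..c}" h g] hf hg f g by auto
  hence h: "h integrable_on {a..c}" by (rule Henstock_Kurzweil_Integration.integrable_combine[OF abc])
  moreover have "integral {a..b} h = integral {a..b} f" "integral {b..c} h = integral {b..c} g"
    using hf hg by (auto intro: integral_cong)
  ultimately show ?thesis
    using Henstock_Kurzweil_Integration.integral_combine[OF abc h] by simp
qed

lemma glued_H_bounded:
  assumes B: "\<forall>t\<in>{0..T}. in_H s (\<phi> t) \<and> Hnorm s (\<phi> t) \<le> B"
    and \<psi>: "admissible {T..T'} R L \<psi>"
  shows "\<forall>t\<in>{0..T'}. in_H s (if t \<le> T then \<phi> t else \<psi> t) \<and> Hnorm s (if t \<le> T then \<phi> t else \<psi> t) \<le> max B R"
proof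
  fix t assume t: "t \<in> {0..T'}"
  show "in_H s (if t \<le> T then \<phi> t else \<psi> t) \<and> Hnorm s (if t \<le> T then \<phi> t else \<psi> t) \<le> max B R"
  proof (cases "t \<le> T")
    case True thus ?thesis using B t by (auto simp: le_max_iff_disj)
  next
    case False
    hence "t \<in> {T..T'}" using t by simp
    note \<psi>t = admissibleD(1-3)[OF \<psi> this]
    thus ?thesis using False H_bound_summable(2)[OF \<psi>t(3)] by (auto simp: in_H_iff_H_bound le_max_iff_disj)
  qed
qed

lemma rQG_solution_glue:
  assumes sol: "rQG_solution (1/2) \<mu> s \<theta>0 T \<phi>" and T: "0 \<le> T"
    and \<psi>: "admissible {T..T'} R L \<psi>" "\<psi> T = \<phi> T"
    and \<psi>_eq: "\<And>t k. t \<in> {T..T'} \<Longrightarrow> \<psi> t k = picard_map T (\<phi> T) \<psi> t k"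
  shows "rQG_solution (1/2) \<mu> s \<theta>0 T' (\<lambda>t. if t \<le> T then \<phi> t else \<psi> t)"
  unfolding rQG_solution_half_iff
proof (intro conjI ballI allI)
  define \<phi>' where "\<phi>' t = (if t \<le> T then \<phi> t else \<psi> t)" for t
  show "\<exists>B. \<forall>t\<in>{0..T'}. in_H s (\<phi>' t) \<and> Hnorm s (\<phi>' t) \<le> B"
    using sol glued_H_bounded[OF _ \<psi>(1)] unfolding rQG_solution_def \<phi>'_def by blast
  fix t k assume t: "t \<in> {0..T'}"
  define F where "F Q \<sigma> = reg_flux \<mu> (Q \<sigma>) (Q \<sigma>) k" for Q :: "real \<Rightarrow> int \<times> int \<Rightarrow> complex" and \<sigma>
  have start: "F \<phi> integrable_on {0..u} \<and> \<phi> u k = \<theta>0 k - integral {0..u} (F \<phi>)" if "u \<in> {0..T}" for u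
    using sol that unfolding rQG_solution_half_iff F_def by blast
  have "F \<phi>' integrable_on {0..t} \<and> \<phi>' t k = \<theta>0 k - integral {0..t} (F \<phi>')"
  proof (cases "t \<le> T")
    case True
    have "F \<phi>' integrable_on {0..t} \<longleftrightarrow> F \<phi> integrable_on {0..t}"
      and "integral {0..t} (F \<phi>') = integral {0..t} (F \<phi>)"
      using True by (auto simp: \<phi>'_def F_def intro!: integral_cong Henstock_Kurzweil_Integration.integrable_cong)
    thus ?thesis using start[of t] t True by (simp add: \<phi>'_def)
  next
    case False
    have t': "t \<in> {T..T'}" using t False by auto
    have "F \<psi> integrable_on {T..t}"
      unfolding F_def by (rule admissible_integrable[OF \<psi>(1)]) (use t' in auto)
    hence "F \<phi>' integrable_on {0..t} \<and> integral {0..t} (F \<phi>') = integral {0..T} (F \<phi>) + integral {T..t} (F \<psi>)"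
      using start[of T] T False \<psi>(2)
      by (intro integral_piecewise) (auto simp: \<phi>'_def F_def intro!: arg_cong2[where f="reg_flux \<mu>"])
    moreover have "integral {T..t} (F \<psi>) = \<phi> T k - \<psi> t k"
      using \<psi>_eq[OF t', of k] by (simp add: picard_map_def F_def[abs_def])
    ultimately show ?thesis using start[of T] T False by (simp add: \<phi>'_def)
  qed
  thus "(\<lambda>\<tau>. reg_flux \<mu> (\<phi>' \<tau>) (\<phi>' \<tau>) k) integrable_on {0..t}"
    and "\<phi>' t k = \<theta>0 k - integral {0..t} (\<lambda>\<tau>. reg_flux \<mu> (\<phi>' \<tau>) (\<phi>' \<tau>) k)"
    by (simp_all add: F_def[abs_def])
qed

lemma rQG_solution_extend:
  assumes sol: "rQG_solution (1/2) \<mu> s \<theta>0 T \<phi>" and T: "0 \<le> T"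
    and K: "0 < K" "Hnorm s (\<phi> T) \<le> K"
  obtains \<phi>' where "rQG_solution (1/2) \<mu> s \<theta>0 (T + 1 / (8 * C * K)) \<phi>'" "\<forall>t\<in>{0..T}. \<phi>' t = \<phi> t"
proof -
  have data: "in_H s (\<phi> T)" using sol T unfolding rQG_solution_def by auto
  hence "hermitian (\<phi> T)" "\<phi> T (0, 0) = 0" unfolding in_H_iff_H_bound by auto
  moreover have "H_bound s (\<phi> T) K" by (rule H_bound_mono[OF in_H_H_bound[OF data] K(2)])
  ultimately obtain \<psi> where \<psi>: "\<psi> T = \<phi> T" "admissible {T..T + 1 / (8 * C * K)} (2 * K) (4 * C * K\<^sup>2) \<psi>"
    "\<And>t k. t \<in> {T..T + 1 / (8 * C * K)} \<Longrightarrow> \<psi> t k = picard_map T (\<phi> T) \<psi> t k"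
    using local_existence[OF K(1), where a=T] by metis
  show ?thesis by (rule that[OF rQG_solution_glue[OF sol T \<psi>(2,1,3)]]) auto
qed

lemma rQG_solution_continuation:
  assumes sol: "rQG_solution (1/2) \<mu> s \<theta>0 T \<theta>" and T: "0 \<le> T" and K: "0 < K"
    and bounded: "\<And>T' \<phi>. T \<le> T' \<Longrightarrow> T' < T1 \<Longrightarrow> rQG_solution (1/2) \<mu> s \<theta>0 T' \<phi> \<Longrightarrow>
      \<forall>t\<in>{0..T}. \<phi> t = \<theta> t \<Longrightarrow> Hnorm s (\<phi> T') \<le> K"
  shows "\<exists>\<phi>. rQG_solution (1/2) \<mu> s \<theta>0 T1 \<phi> \<and> (\<forall>t\<in>{0..T}. \<phi> t = \<theta> t)"
proof -
  define \<delta> where "\<delta> = 1 / (8 * C * K)"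
  have \<delta>: "0 < \<delta>" using C_pos K by (simp add: \<delta>_def)
  have steps: "\<exists>\<phi>. rQG_solution (1/2) \<mu> s \<theta>0 (min (T + real n * \<delta>) T1) \<phi> \<and> (\<forall>t\<in>{0..T}. \<phi> t = \<theta> t)" for n
  proof (induction n)
    case 0 show ?case using sol by (intro exI[of _ \<theta>]) (auto intro: rQG_solution_mono)
  next
    case (Suc n)
    then obtain \<phi> where \<phi>: "rQG_solution (1/2) \<mu> s \<theta>0 (min (T + real n * \<delta>) T1) \<phi>" "\<forall>t\<in>{0..T}. \<phi> t = \<theta> t"
      by blast
    show ?case
    proof (cases "T1 \<le> T + real n * \<delta>")
      case True
      hence "min (T + real (Suc n) * \<delta>) T1 = T1" "min (T + real n * \<delta>) T1 = T1"
        using \<delta> by (auto simp: algebra_simps)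
      thus ?thesis using \<phi> by auto
    next
      case False
      define T' where "T' = T + real n * \<delta>"
      have T': "T \<le> T'" "T' < T1" "rQG_solution (1/2) \<mu> s \<theta>0 T' \<phi>"
        using False \<phi>(1) \<delta> by (simp_all add: T'_def)
      then obtain \<phi>' where "rQG_solution (1/2) \<mu> s \<theta>0 (T' + \<delta>) \<phi>'" "\<forall>t\<in>{0..T'}. \<phi>' t = \<phi> t"
        using rQG_solution_extend[OF T'(3) _ K bounded[OF T' \<phi>(2)]] T unfolding \<delta>_def by auto
      thus ?thesis using \<phi>(2) T'(1)
        by (intro exI[of _ \<phi>']) (auto simp: T'_def algebra_simps intro: rQG_solution_mono)
    qed
  qed
  obtain n where "(T1 - T) / \<delta> < real n" using reals_Archimedean2 by blast
  hence "min (T + real n * \<delta>) T1 = T1" using \<delta> by (simp add: field_simps)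
  thus ?thesis using steps[of n] by simp
qed

end

theorem theorem3p5:
  fixes \<mu> s T T1 :: real and \<theta>0 :: "int \<times> int \<Rightarrow> complex"
    and \<theta> :: "real \<Rightarrow> int \<times> int \<Rightarrow> complex"
  assumes "\<mu> > 0" and "s > 1" and "in_H s \<theta>0" and "T > 0"
    and "rQG_solution (1/2) \<mu> s \<theta>0 T \<theta>"
    and "T < T1"
    and "\<exists>M. \<forall>T'\<in>{T..<T1}. \<forall>\<phi>.
           (rQG_solution (1/2) \<mu> s \<theta>0 T' \<phi> \<and> (\<forall>t\<in>{0..T}. \<phi> t = \<theta> t))
           \<longrightarrow> (\<forall>t\<in>{0..T'}. Hnorm 1 (\<phi> t) \<le> M)"
  shows "\<exists>\<phi>. rQG_solution (1/2) \<mu> s \<theta>0 T1 \<phi> \<and> (\<forall>t\<in>{0..T}. \<phi> t = \<theta> t)"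
proof -
  obtain C where "rqg_bilinear \<mu> s C" using rqg_bilinear_exists[OF assms(1,2)] ..
  then interpret rqg_bilinear \<mu> s C .
  obtain M where M: "\<And>T' \<phi>. T' \<in> {T..<T1} \<Longrightarrow> rQG_solution (1/2) \<mu> s \<theta>0 T' \<phi> \<Longrightarrow>
      \<forall>t\<in>{0..T}. \<phi> t = \<theta> t \<Longrightarrow> \<forall>t\<in>{0..T'}. Hnorm 1 (\<phi> t) \<le> max M 0"
    using assms(7) by (meson max.coboundedI1)
  have x0: "0 \<le> Hnorm s (\<theta> T)" unfolding Hnorm_def by (simp add: infsum_nonneg)
  obtain K where K: "\<And>\<theta>0 T' \<phi> a. rQG_solution (1/2) \<mu> s \<theta>0 T' \<phi> \<Longrightarrow> 0 \<le> a \<Longrightarrow> a \<le> T' \<Longrightarrow>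
      T' - a \<le> T1 - T \<Longrightarrow> (\<forall>t\<in>{a..T'}. Hnorm 1 (\<phi> t) \<le> max M 0) \<Longrightarrow>
      Hnorm s (\<phi> a) \<le> Hnorm s (\<theta> T) \<Longrightarrow> Hnorm s (\<phi> T') \<le> K"
    using rQG_solution_a_priori[OF assms(1,2) max.cobounded2 x0] by blast
  show ?thesis
  proof (rule rQG_solution_continuation[OF assms(5) _ zero_less_one[THEN max.strict_coboundedI1, of K]])
    fix T' \<phi> assume T': "T \<le> T'" "T' < T1" and sol: "rQG_solution (1/2) \<mu> s \<theta>0 T' \<phi>"
      and agree: "\<forall>t\<in>{0..T}. \<phi> t = \<theta> t"
    have "Hnorm s (\<phi> T') \<le> K"
      by (rule K[OF sol _ T'(1)]) (use M[OF _ sol agree] T' assms(4) agree in auto)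
    thus "Hnorm s (\<phi> T') \<le> max 1 K" by simp
  qed (use assms(4) in simp)
qed

end
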